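(* Let $n\ge2$, $1\le s\le n$, and let $R$ be a lattice congruence of the weak order on $S_{n+1}$ with $f(s,s+1,\emptyset)\in F_R$. Define lattice congruences as follows: - $A$ on $S_s$ by $F_A=\{f(a,b,L)\in F_R: 1\le a<b\le s\}$; - $B$ on $S_{n+1-s}$ by $F_B=\{f(a-s,b-s,L-s): f(a,b,L)\in F_R,\ s+1\le a<b\le n+1\}$, where $L-s=\{x-s:x\in L\}$. Then the lattice quotient $S_{n+1}/R$ is isomorphic to the product poset $S_s/A\times S_{n+1-s}/B$ (componentwise order). If moreover $2\le s\le n-1$, let $R'$ be the lattice congruence on $S_n$ with $$F_{R'}=F_A\cup\{f(a+s-1,b+s-1,L+s-1): f(a,b,L)\in F_B\}\cup D,$$ where $D$ is the downset in the forcing order of $S_n$ generated by $f(s-1,s+1,\emptyset)$ and $f(s-1,s+1,\{s\})$. Then $S_n/R'$ is also isomorphic to $S_s/A\times S_{n+1-s}/B$; in particular $S_{n+1}/R\cong S_n/R'$.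
   Context: $S_m$ is the set of permutations of $[m]$ with the weak order (inclusion of inversion sets), which is a lattice; cover relations are swaps of adjacent entries. A lattice congruence is an equivalence relation compatible with joins and meets. The lattice quotient $S_m/R$ is the set of classes, ordered by $X<Y$ iff $x<y$ for some $x\in X$, $y\in Y$. Fences. $]a,b[=\{a+1,\dots,b-1\}$. For $1\le a<b\le m$ and $L\subseteq\,]a,b[$, the fence $f(a,b,L)$ is the set of cover edges of the weak order on $S_m$ joining two permutations that differ by swapping the adjacent entries $a,b$, with all values of $L$ to the left of $a,b$ and all values of $]a,b[\setminus L$ to their right. Forcing order: $f(a,b,L)\prec f(c,d,M)$ iff $a\le c<d\le b$, $(a,b)\ne(c,d)$, $M=L\cap\,]c,d[$. Reading's theorem. Lattice congruences $R$ of $S_m$ correspond bijectively to downsets $F_R$ of the forcing order, where $F_R$ is the set of fences whose edges join $R$-equivalent permutations; a cover edge joins equivalent permutations iff it lies in a fence of $F_R$. *)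

theory Defs
  imports Main
begin

definition perms :: "nat \<Rightarrow> nat list set" where
  "perms m = {w. distinct w \<and> set w = {1..m}}"

definition inversions :: "nat list \<Rightarrow> (nat \<times> nat) set" where
  "inversions w = {(a,b). a < b \<and> (\<exists>i j. i < j \<and> j < length w \<and> w!i = b \<and> w!j = a)}"

definition weak_le :: "nat list \<Rightarrow> nat list \<Rightarrow> bool" where
  "weak_le u v \<longleftrightarrow> inversions u \<subseteq> inversions v"

definition is_join :: "nat \<Rightarrow> nat list \<Rightarrow> nat list \<Rightarrow> nat list \<Rightarrow> bool" where
  "is_join m x y z \<longleftrightarrow> z \<in> perms m \<and> weak_le x z \<and> weak_le y z \<and>
     (\<forall>u\<in>perms m. weak_le x u \<and> weak_le y u \<longrightarrow> weak_le z u)"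

definition is_meet :: "nat \<Rightarrow> nat list \<Rightarrow> nat list \<Rightarrow> nat list \<Rightarrow> bool" where
  "is_meet m x y z \<longleftrightarrow> z \<in> perms m \<and> weak_le z x \<and> weak_le z y \<and>
     (\<forall>u\<in>perms m. weak_le u x \<and> weak_le u y \<longrightarrow> weak_le u z)"

definition lattice_cong :: "nat \<Rightarrow> (nat list \<times> nat list) set \<Rightarrow> bool" where
  "lattice_cong m R \<longleftrightarrow> equiv (perms m) R \<and>
     (\<forall>x y z j j'. (x,y) \<in> R \<longrightarrow> z \<in> perms m \<longrightarrow> is_join m x z j \<longrightarrow> is_join m y z j' \<longrightarrow> (j,j') \<in> R) \<and>
     (\<forall>x y z j j'. (x,y) \<in> R \<longrightarrow> z \<in> perms m \<longrightarrow> is_meet m x z j \<longrightarrow> is_meet m y z j' \<longrightarrow> (j,j') \<in> R)"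

text \<open>Fences f(a,b,L) are represented by their labels (a,b,L).\<close>
type_synonym fence = "nat \<times> nat \<times> nat set"

definition is_fence :: "nat \<Rightarrow> fence \<Rightarrow> bool" where
  "is_fence m f \<longleftrightarrow> (case f of (a,b,L) \<Rightarrow> 1 \<le> a \<and> a < b \<and> b \<le> m \<and> L \<subseteq> {a<..<b})"

text \<open>The cover edges (w,v), w below v, of the fence f(a,b,L) in S_m: w has a,b adjacent
  (a immediately before b), v is obtained by swapping them, values of L are left of a,b,
  values of ]a,b[ - L are right of them.\<close>
definition fence_edges :: "nat \<Rightarrow> fence \<Rightarrow> (nat list \<times> nat list) set" where
  "fence_edges m f = (case f of (a,b,L) \<Rightarrow>
     {(w,v). w \<in> perms m \<and> (\<exists>i. Suc i < length w \<and> w!i = a \<and> w!(Suc i) = b \<and>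
        v = w[i := b, Suc i := a] \<and>
        (\<forall>x\<in>L. \<exists>j<i. w!j = x) \<and>
        (\<forall>x\<in>{a<..<b} - L. \<exists>j. Suc i < j \<and> j < length w \<and> w!j = x))})"

definition fences_of :: "nat \<Rightarrow> (nat list \<times> nat list) set \<Rightarrow> fence set" where
  "fences_of m R = {f. is_fence m f \<and> fence_edges m f \<subseteq> R}"

definition forces :: "fence \<Rightarrow> fence \<Rightarrow> bool" where
  "forces f g \<longleftrightarrow> (case f of (a,b,L) \<Rightarrow> case g of (c,d,M) \<Rightarrow>
     a \<le> c \<and> c < d \<and> d \<le> b \<and> (a,b) \<noteq> (c,d) \<and> M = L \<inter> {c<..<d})"

definition fence_downset :: "nat \<Rightarrow> fence set \<Rightarrow> fence set" where
  "fence_downset m G = {f. is_fence m f \<and> (\<exists>g\<in>G. f = g \<or> forces f g)}"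

definition shift_fence :: "nat \<Rightarrow> fence \<Rightarrow> fence" where
  "shift_fence k f = (case f of (a,b,L) \<Rightarrow> (a + k, b + k, (\<lambda>x. x + k) ` L))"

definition unshift_fence :: "nat \<Rightarrow> fence \<Rightarrow> fence" where
  "unshift_fence k f = (case f of (a,b,L) \<Rightarrow> (a - k, b - k, (\<lambda>x. x - k) ` L))"

definition quot :: "nat \<Rightarrow> (nat list \<times> nat list) set \<Rightarrow> nat list set set" where
  "quot m R = perms m // R"

definition quot_le :: "nat list set \<Rightarrow> nat list set \<Rightarrow> bool" where
  "quot_le X Y \<longleftrightarrow> (\<exists>x\<in>X. \<exists>y\<in>Y. weak_le x y)"

definition prod_le :: "('a \<Rightarrow> 'a \<Rightarrow> bool) \<Rightarrow> ('b \<Rightarrow> 'b \<Rightarrow> bool) \<Rightarrow> 'a \<times> 'b \<Rightarrow> 'a \<times> 'b \<Rightarrow> bool" where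
  "prod_le le1 le2 p q \<longleftrightarrow> le1 (fst p) (fst q) \<and> le2 (snd p) (snd q)"

definition order_iso :: "'a set \<Rightarrow> ('a \<Rightarrow> 'a \<Rightarrow> bool) \<Rightarrow> 'b set \<Rightarrow> ('b \<Rightarrow> 'b \<Rightarrow> bool) \<Rightarrow> bool" where
  "order_iso P leP Q leQ \<longleftrightarrow> (\<exists>\<phi>. bij_betw \<phi> P Q \<and>
     (\<forall>x\<in>P. \<forall>y\<in>P. leP x y \<longleftrightarrow> leQ (\<phi> x) (\<phi> y)))"

end

theory Submission
  imports Defs
begin

text \<open>Contracted edges are organised by fences: whether a cover edge is contracted depends only on its
  fence (squares and hexagons of the weak order), and the hexagon on three values shows that contracting
  a fence forces the fences below it. Contracting \<open>f(s, s+1, \<emptyset>)\<close> therefore contracts every fence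
  straddling \<open>s\<close>, so modulo \<open>R\<close> only the restrictions of a permutation to the values \<open>\<le> s\<close> and to the
  values \<open>> s\<close> matter. Since every congruence class is connected by contracted cover edges, and a
  contracted cover edge of either factor lifts to one of \<open>S\<^sub>n\<^sub>+\<^sub>1\<close>, two permutations are \<open>R\<close>-congruent
  exactly when both restrictions are congruent, under \<open>A\<close> and \<open>B\<close> respectively. The same argument
  applies to \<open>R'\<close> on \<open>S\<^sub>n\<close>, where the two factors share the value \<open>s\<close> and the downset \<open>D\<close> contracts
  every fence straddling \<open>s\<close>.\<close>

fun before :: "'a list \<Rightarrow> 'a \<Rightarrow> 'a \<Rightarrow> bool" where
  "before [] x y = False"
| "before (z # w) x y = ((z = x \<and> y \<in> set w) \<or> before w x y)"

lemma before_iff_nth: "(\<exists>i j. i < j \<and> j < length w \<and> w!i = x \<and> w!j = y) \<longleftrightarrow> before w x y"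
proof (induction w)
  case Nil then show ?case by simp
next
  case (Cons z w)
  show ?case
  proof
    assume "\<exists>i j. i < j \<and> j < length (z#w) \<and> (z#w)!i = x \<and> (z#w)!j = y"
    then obtain i j where ij: "i < j" "j < length (z#w)" "(z#w)!i = x" "(z#w)!j = y" by blast
    then obtain j' where j': "j = Suc j'" by (cases j) auto
    show "before (z#w) x y"
    proof (cases i)
      case 0 then show ?thesis using ij j' by (auto simp: in_set_conv_nth)
    next
      case (Suc i') then show ?thesis using ij j' Cons.IH by auto
    qed
  next
    assume "before (z#w) x y"
    then consider "z = x" "y \<in> set w" | "before w x y" by auto
    then show "\<exists>i j. i < j \<and> j < length (z#w) \<and> (z#w)!i = x \<and> (z#w)!j = y"
    proof cases
      case 1
      then obtain j where "j < length w" "w!j = y" by (auto simp: in_set_conv_nth)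
      then show ?thesis using 1 by (intro exI[of _ 0] exI[of _ "Suc j"]) auto
    next
      case 2
      then obtain i j where "i < j" "j < length w" "w!i = x" "w!j = y" using Cons.IH by blast
      then show ?thesis by (intro exI[of _ "Suc i"] exI[of _ "Suc j"]) auto
    qed
  qed
qed

lemma inversions_before: "inversions w = {(a,b). a < b \<and> before w b a}"
  by (simp only: inversions_def before_iff_nth)

lemma before_set: "before w x y \<Longrightarrow> x \<in> set w \<and> y \<in> set w"
  by (induction w) auto

lemma before_append: "before (U @ V) x y \<longleftrightarrow> before U x y \<or> before V x y \<or> (x \<in> set U \<and> y \<in> set V)"
  by (induction U) auto

lemma before_filter: "before (filter P w) x y \<longleftrightarrow> P x \<and> P y \<and> before w x y"
  by (induction w) (auto dest: before_set)

lemma before_map: "before (map f w) u v \<longleftrightarrow> (\<exists>x y. u = f x \<and> v = f y \<and> before w x y)"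
  by (induction w) auto

lemma before_irrefl: "distinct w \<Longrightarrow> \<not> before w x x"
  by (induction w) (auto dest: before_set)

lemma before_asym: "distinct w \<Longrightarrow> before w x y \<Longrightarrow> \<not> before w y x"
  by (induction w) (auto dest: before_set)

lemma before_trans: "distinct w \<Longrightarrow> before w x y \<Longrightarrow> before w y z \<Longrightarrow> before w x z"
  by (induction w) (auto dest: before_set)

lemma before_total: "x \<in> set w \<Longrightarrow> y \<in> set w \<Longrightarrow> x \<noteq> y \<Longrightarrow> before w x y \<or> before w y x"
  by (induction w) auto

lemma before_eq_imp_eq:
  assumes "distinct x" "distinct y" "set x = set y" "\<And>u v. before x u v \<longleftrightarrow> before y u v"
  shows "x = y"
  using assms
proof (induction x arbitrary: y)
  case Nil then show ?case by simp
next
  case (Cons h x)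
  then obtain k y' where y: "y = k # y'" by (cases y) auto
  have "h = k"
  proof (rule ccontr)
    assume "h \<noteq> k"
    then have "before y k h" using Cons.prems y by auto
    then have "before x k h" using Cons.prems(4)[of k h] \<open>h \<noteq> k\<close> by simp
    then show False using Cons.prems(1) before_set by fastforce
  qed
  moreover have "x = y'"
  proof (rule Cons.IH)
    show "distinct x" "distinct y'" using Cons.prems y by auto
    show "set x = set y'" using Cons.prems(1-3) y \<open>h = k\<close> by (simp add: insert_ident)
    fix u v
    have "before x u v \<longleftrightarrow> before (h#x) u v \<and> u \<noteq> h" using Cons.prems(1) before_set by fastforce
    moreover have "before y' u v \<longleftrightarrow> before (k#y') u v \<and> u \<noteq> k" using Cons.prems(2) y before_set by fastforce
    ultimately show "before x u v \<longleftrightarrow> before y' u v" using Cons.prems(4) y \<open>h = k\<close> by auto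
  qed
  ultimately show ?case using y by simp
qed

lemma perms_distinct: "w \<in> perms m \<Longrightarrow> distinct w"
  and perms_set: "w \<in> perms m \<Longrightarrow> set w = {1..m}"
  by (auto simp: perms_def)

lemma perms_swap: "X @ [p,q] @ Y \<in> perms m \<Longrightarrow> X @ [q,p] @ Y \<in> perms m"
  by (auto simp: perms_def)

lemma inversions_inj:
  assumes "x \<in> perms m" "y \<in> perms m" "inversions x = inversions y"
  shows "x = y"
proof (rule before_eq_imp_eq)
  show dist: "distinct x" "distinct y" and set: "set x = set y" using assms by (auto simp: perms_def)
  fix u v :: nat
  have less: "before x u v \<longleftrightarrow> before y u v" if "u < v" for u v
  proof -
    have "before x v u \<longleftrightarrow> before y v u" using assms(3) that by (auto simp: inversions_before)
    then show ?thesis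
      using set before_asym[OF dist(1), of u v] before_asym[OF dist(2), of u v]
        before_total[of u x v] before_total[of u y v] before_set[of x u v] before_set[of y u v] that
      by (metis less_irrefl)
  qed
  consider "u < v" | "v < u" | "u = v" by (cases u v rule: linorder_cases) auto
  then show "before x u v \<longleftrightarrow> before y u v"
  proof cases
    case 2 then show ?thesis using assms(3) by (auto simp: inversions_before)
  qed (use less before_irrefl[OF dist(1)] before_irrefl[OF dist(2)] in auto)
qed

lemma finite_inversions: "finite (inversions w)"
proof -
  have "inversions w \<subseteq> set w \<times> set w" unfolding inversions_before by (blast dest: before_set)
  then show ?thesis by (rule finite_subset) auto
qed

lemma inversions_trans:
  "distinct u \<Longrightarrow> (a,b) \<in> inversions u \<Longrightarrow> (b,c) \<in> inversions u \<Longrightarrow> (a,c) \<in> inversions u"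
  by (auto simp: inversions_before intro: before_trans)

lemma inversions_cotrans:
  "distinct u \<Longrightarrow> b \<in> set u \<Longrightarrow> a < b \<Longrightarrow> b < c \<Longrightarrow> (a,c) \<in> inversions u
   \<Longrightarrow> (a,b) \<in> inversions u \<or> (b,c) \<in> inversions u"
  by (auto simp: inversions_before) (metis before_set before_total before_trans less_irrefl)

lemma inversions_swap:
  assumes "distinct (X @ [p,q] @ Y)" "p < q"
  shows "inversions (X @ [q,p] @ Y) = insert (p,q) (inversions (X @ [p,q] @ Y))"
    and "(p,q) \<notin> inversions (X @ [p,q] @ Y)"
proof -
  have "before (X @ [q,p] @ Y) x y \<longleftrightarrow>
      (before (X @ [p,q] @ Y) x y \<and> \<not> (x = p \<and> y = q)) \<or> (x = q \<and> y = p)" for x y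
    using assms before_set[of X x y] before_set[of Y x y] by (auto simp: before_append)
  then show "inversions (X @ [q,p] @ Y) = insert (p,q) (inversions (X @ [p,q] @ Y))"
    using assms(2) by (auto simp: inversions_before)
  have "before (X @ [p,q] @ Y) p q" by (simp add: before_append)
  then show "(p,q) \<notin> inversions (X @ [p,q] @ Y)"
    using before_asym[OF assms(1)] by (auto simp: inversions_before)
qed

lemma inversions_append_separated:
  assumes "\<forall>x\<in>set P. \<forall>y\<in>set Q. x < y"
  shows "inversions (P @ Q) = inversions P \<union> inversions Q"
proof -
  have "before (P @ Q) b a \<longleftrightarrow> before P b a \<or> before Q b a" if "a < b" for a b
    using assms that by (auto simp: before_append dest: less_asym)
  then show ?thesis unfolding inversions_before by auto
qed

lemma fence_edges_iff:
  "(w,v) \<in> fence_edges m (a,b,L) \<longleftrightarrow>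
   (\<exists>U V. w = U @ [a,b] @ V \<and> v = U @ [b,a] @ V \<and> w \<in> perms m \<and> L \<subseteq> set U \<and> {a<..<b} - L \<subseteq> set V)"
proof
  assume "(w,v) \<in> fence_edges m (a,b,L)"
  then obtain i where w: "w \<in> perms m" and i: "Suc i < length w" "w!i = a" "w!(Suc i) = b"
    "v = w[i := b, Suc i := a]" "\<forall>x\<in>L. \<exists>j<i. w!j = x"
    "\<forall>x\<in>{a<..<b} - L. \<exists>j. Suc i < j \<and> j < length w \<and> w!j = x"
    unfolding fence_edges_def by auto
  define U where "U = take i w"
  define V where "V = drop (Suc (Suc i)) w"
  have wd: "w = U @ [a,b] @ V"
    using i(1-3) id_take_nth_drop[of i w] Cons_nth_drop_Suc[of "Suc i" w] unfolding U_def V_def by simp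
  have "length U = i" using i(1) unfolding U_def by simp
  then have "v = U @ [b,a] @ V" using i(4) wd by (simp add: list_update_append)
  moreover have "L \<subseteq> set U"
    using i(1,5) unfolding U_def by (force simp: in_set_conv_nth)
  moreover have "{a<..<b} - L \<subseteq> set V"
  proof
    fix x assume "x \<in> {a<..<b} - L"
    then obtain j where j: "Suc i < j" "j < length w" "w!j = x" using i(6) by blast
    then obtain k where "j = Suc (Suc i) + k" using less_iff_Suc_add by auto
    then have "V ! k = x" "k < length V" unfolding V_def using j by auto
    then show "x \<in> set V" by (metis nth_mem)
  qed
  ultimately show "\<exists>U V. w = U @ [a,b] @ V \<and> v = U @ [b,a] @ V \<and> w \<in> perms m \<and> L \<subseteq> set U \<and> {a<..<b} - L \<subseteq> set V"
    using wd w by blast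
next
  assume "\<exists>U V. w = U @ [a,b] @ V \<and> v = U @ [b,a] @ V \<and> w \<in> perms m \<and> L \<subseteq> set U \<and> {a<..<b} - L \<subseteq> set V"
  then obtain U V where d: "w = U @ [a,b] @ V" "v = U @ [b,a] @ V" "w \<in> perms m" "L \<subseteq> set U" "{a<..<b} - L \<subseteq> set V"
    by blast
  define i where "i = length U"
  have "Suc i < length w" "w!i = a" "w!(Suc i) = b" "v = w[i := b, Suc i := a]"
    using d unfolding i_def by (auto simp: nth_append list_update_append)
  moreover have "\<forall>x\<in>L. \<exists>j<i. w!j = x"
  proof
    fix x assume "x \<in> L"
    then have "x \<in> set U" using d(4) by blast
    then obtain j where "j < length U" "U!j = x" by (auto simp: in_set_conv_nth)
    then show "\<exists>j<i. w!j = x" using d(1) unfolding i_def by (auto simp: nth_append)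
  qed
  moreover have "\<forall>x\<in>{a<..<b} - L. \<exists>j. Suc i < j \<and> j < length w \<and> w!j = x"
  proof
    fix x assume "x \<in> {a<..<b} - L"
    then have "x \<in> set V" using d(5) by blast
    then obtain j where "j < length V" "V!j = x" by (auto simp: in_set_conv_nth)
    then show "\<exists>j. Suc i < j \<and> j < length w \<and> w!j = x" using d(1) unfolding i_def
      by (intro exI[of _ "Suc (Suc (length U)) + j"]) (auto simp: nth_append)
  qed
  ultimately show "(w,v) \<in> fence_edges m (a,b,L)" unfolding fence_edges_def using d(3) by auto
qed

text \<open>An edge swapping adjacent \<open>a < b\<close> lies in exactly one fence: its label set \<open>L\<close> consists of
  the values strictly between \<open>a\<close> and \<open>b\<close> to the left of the pair.\<close>

lemma fences_of_contracts_edge: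
  assumes "(a,b,L) \<in> fences_of m R" "U @ [a,b] @ V \<in> perms m" "L = {x\<in>{a<..<b}. x \<in> set U}"
  shows "(U @ [a,b] @ V, U @ [b,a] @ V) \<in> R"
proof -
  have "1 \<le> a" "b \<le> m" using assms(1) by (auto simp: fences_of_def is_fence_def)
  then have "{a<..<b} - L \<subseteq> set V" using assms(2,3) by (auto simp: perms_def)
  then have "(U @ [a,b] @ V, U @ [b,a] @ V) \<in> fence_edges m (a,b,L)"
    using assms fence_edges_iff by auto
  then show ?thesis using assms(1) by (auto simp: fences_of_def)
qed

lemma fences_ofI:
  assumes "\<And>U V. U @ [a,b] @ V \<in> perms m \<Longrightarrow> L \<subseteq> set U \<Longrightarrow> {a<..<b} - L \<subseteq> set V
           \<Longrightarrow> (U @ [a,b] @ V, U @ [b,a] @ V) \<in> R"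
    and "is_fence m (a,b,L)"
  shows "(a,b,L) \<in> fences_of m R"
  using assms unfolding fences_of_def by (auto simp: fence_edges_iff)

lemma lattice_cong_equiv: "lattice_cong m R \<Longrightarrow> equiv (perms m) R"
  by (simp add: lattice_cong_def)

lemma lattice_cong_refl: "lattice_cong m R \<Longrightarrow> x \<in> perms m \<Longrightarrow> (x,x) \<in> R"
  using lattice_cong_equiv equiv_def refl_onD by metis

lemma lattice_cong_sym: "lattice_cong m R \<Longrightarrow> (x,y) \<in> R \<Longrightarrow> (y,x) \<in> R"
  using lattice_cong_equiv equiv_def symD by metis

lemma lattice_cong_trans: "lattice_cong m R \<Longrightarrow> (x,y) \<in> R \<Longrightarrow> (y,z) \<in> R \<Longrightarrow> (x,z) \<in> R"
  using lattice_cong_equiv equiv_def transD by metis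

lemma lattice_cong_perms: "lattice_cong m R \<Longrightarrow> (x,y) \<in> R \<Longrightarrow> x \<in> perms m \<and> y \<in> perms m"
  using lattice_cong_equiv equiv_def refl_on_def by blast

lemma lattice_cong_join:
  "lattice_cong m R \<Longrightarrow> (x,y) \<in> R \<Longrightarrow> z \<in> perms m \<Longrightarrow> is_join m x z j \<Longrightarrow> is_join m y z j' \<Longrightarrow> (j,j') \<in> R"
  unfolding lattice_cong_def by blast

lemma lattice_cong_meet:
  "lattice_cong m R \<Longrightarrow> (x,y) \<in> R \<Longrightarrow> z \<in> perms m \<Longrightarrow> is_meet m x z j \<Longrightarrow> is_meet m y z j' \<Longrightarrow> (j,j') \<in> R"
  unfolding lattice_cong_def by blast

lemma is_join_of_inversions: "z \<in> perms m \<Longrightarrow> inversions z = inversions x \<union> inversions y \<Longrightarrow> is_join m x y z"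
  by (auto simp: is_join_def weak_le_def)

lemma is_meet_of_inversions: "z \<in> perms m \<Longrightarrow> inversions z = inversions x \<inter> inversions y \<Longrightarrow> is_meet m x y z"
  by (auto simp: is_meet_def weak_le_def)

lemma is_join_of_le: "y \<in> perms m \<Longrightarrow> weak_le x y \<Longrightarrow> is_join m x y y"
  by (auto simp: is_join_def weak_le_def)

lemma is_join_of_ge: "x \<in> perms m \<Longrightarrow> weak_le y x \<Longrightarrow> is_join m x y x"
  by (auto simp: is_join_def weak_le_def)

lemma is_meet_of_ge: "y \<in> perms m \<Longrightarrow> weak_le y x \<Longrightarrow> is_meet m x y y"
  by (auto simp: is_meet_def weak_le_def)

lemma is_join_commute: "is_join m x y z \<Longrightarrow> is_join m y x z"
  by (auto simp: is_join_def)

lemma is_meet_commute: "is_meet m x y z \<Longrightarrow> is_meet m y x z"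
  by (auto simp: is_meet_def)

lemma lattice_cong_convex:
  assumes "lattice_cong m R" "(x,z) \<in> R" "y \<in> perms m" "weak_le x y" "weak_le y z"
  shows "(x,y) \<in> R" "(y,z) \<in> R"
proof -
  have "x \<in> perms m" "z \<in> perms m" using lattice_cong_perms[OF assms(1,2)] by auto
  then have "is_join m x y y" "is_join m z y z" using is_join_of_le is_join_of_ge assms by auto
  then show yz: "(y,z) \<in> R" using lattice_cong_join[OF assms(1,2,3)] by blast
  show "(x,y) \<in> R" using lattice_cong_trans[OF assms(1,2) lattice_cong_sym[OF assms(1) yz]] .
qed

lemma lattice_cong_square:
  assumes R: "lattice_cong m R" and perms: "w \<in> perms m" "v \<in> perms m" "w' \<in> perms m" "v' \<in> perms m"
    and inv: "inversions v = insert e (inversions w)" "inversions w' = insert e' (inversions w)"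
      "inversions v' = insert e (insert e' (inversions w))"
    and ne: "e \<notin> inversions w" "e' \<notin> inversions w" "e \<noteq> e'"
  shows "(w,v) \<in> R \<longleftrightarrow> (w',v') \<in> R"
proof
  assume "(w,v) \<in> R"
  moreover have "is_join m w w' w'" by (rule is_join_of_le) (use perms inv in \<open>auto simp: weak_le_def\<close>)
  moreover have "is_join m v w' v'" by (rule is_join_of_inversions) (use perms inv in auto)
  ultimately show "(w',v') \<in> R" using lattice_cong_join[OF R] perms by blast
next
  assume "(w',v') \<in> R"
  moreover have "is_meet m w' v w" using is_meet_of_inversions perms inv ne by auto
  moreover have "is_meet m v' v v" by (rule is_meet_of_ge) (use perms inv in \<open>auto simp: weak_le_def\<close>)
  ultimately show "(w,v) \<in> R" using lattice_cong_meet[OF R] perms by blast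
qed

locale hexagon =
  fixes m :: nat and X Y :: "nat list" and p q r :: nat
  assumes perm: "X @ [p,q,r] @ Y \<in> perms m" and pq: "p < q" and qr: "q < r"
begin

text \<open>In \<open>eijk\<close> the digits \<open>1, 2, 3\<close> stand for \<open>p, q, r\<close>, listed in the order of the digits.\<close>

abbreviation "e123 \<equiv> X @ [p,q,r] @ Y"
abbreviation "e213 \<equiv> X @ [q,p,r] @ Y"
abbreviation "e231 \<equiv> X @ [q,r,p] @ Y"
abbreviation "e321 \<equiv> X @ [r,q,p] @ Y"
abbreviation "e132 \<equiv> X @ [p,r,q] @ Y"
abbreviation "e312 \<equiv> X @ [r,p,q] @ Y"

abbreviation "K \<equiv> inversions e123"

lemma distinct_e123: "distinct e123" using perm by (simp add: perms_def)

lemma hexagon_perms: "e213 \<in> perms m" "e231 \<in> perms m" "e321 \<in> perms m" "e132 \<in> perms m" "e312 \<in> perms m"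
  using perm by (auto simp: perms_def)

lemma inv213: "inversions e213 = insert (p,q) K" and pq_notin: "(p,q) \<notin> K"
  using inversions_swap[of X p q "r#Y"] distinct_e123 pq by auto

lemma inv132: "inversions e132 = insert (q,r) K" and qr_notin: "(q,r) \<notin> K"
  using inversions_swap[of "X @ [p]" q r Y] distinct_e123 qr by auto

lemma inv231: "inversions e231 = insert (p,r) (insert (p,q) K)" and pr_notin: "(p,r) \<notin> K"
proof -
  have d: "distinct ((X @ [q]) @ [p,r] @ Y)" using distinct_e123 by auto
  have "inversions ((X @ [q]) @ [r,p] @ Y) = insert (p,r) (inversions ((X @ [q]) @ [p,r] @ Y))"
    "(p,r) \<notin> inversions ((X @ [q]) @ [p,r] @ Y)"
    using inversions_swap[OF d] pq qr by auto
  then show "inversions e231 = insert (p,r) (insert (p,q) K)" "(p,r) \<notin> K"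
    using inv213 by auto
qed

lemma inv312: "inversions e312 = insert (p,r) (insert (q,r) K)"
proof -
  have d: "distinct (X @ [p,r] @ (q#Y))" using distinct_e123 by auto
  have "inversions (X @ [r,p] @ (q#Y)) = insert (p,r) (inversions (X @ [p,r] @ (q#Y)))"
    using inversions_swap[OF d] pq qr by auto
  then show ?thesis using inv132 by auto
qed

lemma inv321: "inversions e321 = insert (q,r) (insert (p,r) (insert (p,q) K))"
proof -
  have d: "distinct (X @ [q,r] @ (p#Y))" using distinct_e123 by auto
  have "inversions (X @ [r,q] @ (p#Y)) = insert (q,r) (inversions (X @ [q,r] @ (p#Y)))"
    using inversions_swap[OF d] pq qr by auto
  then show ?thesis using inv231 by auto
qed

lemmas hexagon_inversions = inv213 inv132 inv231 inv312 inv321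

lemma join_e213_e132: "is_join m e213 e132 e321"
  unfolding is_join_def weak_le_def
proof (intro conjI ballI impI)
  show "e321 \<in> perms m" using hexagon_perms by auto
  show "inversions e213 \<subseteq> inversions e321" "inversions e132 \<subseteq> inversions e321" using hexagon_inversions by auto
  fix u assume u: "u \<in> perms m" "inversions e213 \<subseteq> inversions u \<and> inversions e132 \<subseteq> inversions u"
  then have "(p,q) \<in> inversions u" "(q,r) \<in> inversions u" using hexagon_inversions by auto
  then have "(p,r) \<in> inversions u" using inversions_trans u(1) by (auto simp: perms_def)
  then show "inversions e321 \<subseteq> inversions u" using u hexagon_inversions by auto
qed

lemma meet_e312_e231: "is_meet m e312 e231 e123"
  unfolding is_meet_def weak_le_def
proof (intro conjI ballI impI)
  show "e123 \<in> perms m" using perm by auto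
  show "K \<subseteq> inversions e312" "K \<subseteq> inversions e231" using hexagon_inversions by auto
  fix u assume u: "u \<in> perms m" "inversions u \<subseteq> inversions e312 \<and> inversions u \<subseteq> inversions e231"
  have ne: "(p,q) \<noteq> (q,r)" "(p,r) \<noteq> (q,r)" "(p,r) \<noteq> (p,q)" using pq qr by auto
  have sub: "inversions u \<subseteq> insert (p,r) K" using u hexagon_inversions ne pq_notin qr_notin pr_notin by auto
  have "(p,r) \<notin> inversions u"
  proof
    assume h: "(p,r) \<in> inversions u"
    have "q \<in> set u" using u(1) perm by (auto simp: perms_def)
    then have "(p,q) \<in> inversions u \<or> (q,r) \<in> inversions u"
      using inversions_cotrans[OF _ _ pq qr h] u(1) by (auto simp: perms_def)
    then show False using sub ne pq_notin qr_notin by auto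
  qed
  then show "inversions u \<subseteq> K" using sub by auto
qed

lemma meet_e231_e132: "is_meet m e231 e132 e123"
  apply (rule is_meet_of_inversions) using perm hexagon_inversions pq_notin qr_notin pr_notin pq qr by auto

lemma meet_e312_e213: "is_meet m e312 e213 e123"
  apply (rule is_meet_of_inversions) using perm hexagon_inversions pq_notin qr_notin pr_notin pq qr by auto

lemma hexagon_weak_le: "weak_le e123 e213" "weak_le e213 e231" "weak_le e231 e321" "weak_le e123 e132"
  "weak_le e132 e312" "weak_le e312 e321" "weak_le e123 e231" "weak_le e123 e312"
  "weak_le e213 e321" "weak_le e132 e321"
  unfolding weak_le_def using hexagon_inversions by auto

context fixes R assumes R: "lattice_cong m R"
begin

lemma contract_e123_e213:
  assumes "(e123, e213) \<in> R"
  shows "(e132, e312) \<in> R" "(e312, e321) \<in> R" "(e213, e231) \<in> R"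
proof -
  have "(e132, e321) \<in> R"
    using lattice_cong_join[OF R assms hexagon_perms(4) is_join_of_le[OF hexagon_perms(4) hexagon_weak_le(4)] join_e213_e132] .
  then show a: "(e132, e312) \<in> R" "(e312, e321) \<in> R" using lattice_cong_convex[OF R _ hexagon_perms(5)] hexagon_weak_le by auto
  have "(e123, e231) \<in> R"
    using lattice_cong_meet[OF R a(2) hexagon_perms(2) meet_e312_e231 is_meet_of_ge[OF hexagon_perms(2) hexagon_weak_le(3)]] .
  then show "(e213, e231) \<in> R" using lattice_cong_convex[OF R _ hexagon_perms(1)] hexagon_weak_le by auto
qed

lemma contract_e123_e132:
  assumes "(e123, e132) \<in> R"
  shows "(e213, e231) \<in> R" "(e231, e321) \<in> R" "(e132, e312) \<in> R"
proof -
  have "(e213, e321) \<in> R"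
    using lattice_cong_join[OF R assms hexagon_perms(1) is_join_of_le[OF hexagon_perms(1) hexagon_weak_le(1)] is_join_commute[OF join_e213_e132]] .
  then show a: "(e213, e231) \<in> R" "(e231, e321) \<in> R" using lattice_cong_convex[OF R _ hexagon_perms(2)] hexagon_weak_le by auto
  have "(e123, e312) \<in> R"
    using lattice_cong_meet[OF R a(2) hexagon_perms(5) is_meet_commute[OF meet_e312_e231] is_meet_of_ge[OF hexagon_perms(5) hexagon_weak_le(6)]] .
  then show "(e132, e312) \<in> R" using lattice_cong_convex[OF R _ hexagon_perms(4)] hexagon_weak_le by auto
qed

lemma contract_e231_e321: "(e231, e321) \<in> R \<Longrightarrow> (e123, e132) \<in> R"
  using lattice_cong_meet[OF R _ hexagon_perms(4) meet_e231_e132 is_meet_of_ge[OF hexagon_perms(4) hexagon_weak_le(10)]] by blast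

lemma contract_e312_e321: "(e312, e321) \<in> R \<Longrightarrow> (e123, e213) \<in> R"
  using lattice_cong_meet[OF R _ hexagon_perms(1) meet_e312_e213 is_meet_of_ge[OF hexagon_perms(1) hexagon_weak_le(9)]] by blast

end

end

lemma move_to_front:
  assumes cl: "\<And>U1 c d U2. Sw c d \<Longrightarrow> Q (U1 @ [c,d] @ U2) \<Longrightarrow> Q (U1 @ [d,c] @ U2)"
  shows "\<forall>z\<in>set A. Sw z x \<Longrightarrow> Q (A @ x#B) \<Longrightarrow> Q (x#A @ B)"
proof (induction A arbitrary: B rule: rev_induct)
  case Nil then show ?case by simp
next
  case (snoc z A)
  have "Q (A @ [z,x] @ B)" using snoc.prems by simp
  then have "Q (A @ [x,z] @ B)" using cl snoc.prems by simp
  then have "Q (A @ x#(z#B))" by simp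
  then have "Q (x#A @ z#B)" using snoc.IH snoc.prems by simp
  then show ?case by simp
qed

lemma reorder_by_swaps:
  assumes "\<And>U1 c d U2. Sw c d \<Longrightarrow> Q (U1 @ [c,d] @ U2) \<Longrightarrow> Q (U1 @ [d,c] @ U2)"
    and "Q w" "distinct w" "distinct w'" "set w' = set w"
    and "\<And>x y. before w x y \<Longrightarrow> before w' y x \<Longrightarrow> Sw x y"
  shows "Q w'"
  using assms
proof (induction w' arbitrary: w Q)
  case Nil then show ?case by simp
next
  case (Cons x w'')
  have "x \<in> set w" using Cons.prems(5) by auto
  then obtain A B where w: "w = A @ x#B" by (meson split_list)
  have sw: "\<forall>z\<in>set A. Sw z x"
  proof
    fix z assume z: "z \<in> set A"
    have "before w z x" using w z by (simp add: before_append)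
    moreover have "z \<noteq> x" using Cons.prems(3) w z by auto
    then have "z \<in> set w''" using Cons.prems(5) w z by auto
    then have "before (x#w'') x z" by simp
    ultimately show "Sw z x" using Cons.prems(6) by blast
  qed
  have q: "Q (x#A @ B)" using move_to_front[of Sw Q, OF Cons.prems(1) sw] Cons.prems(2) w by blast
  let ?Q = "\<lambda>Z. Q (x#Z)"
  show ?case
  proof (rule Cons.IH[of ?Q "A @ B"])
    show "\<And>U1 c d U2. Sw c d \<Longrightarrow> ?Q (U1 @ [c,d] @ U2) \<Longrightarrow> ?Q (U1 @ [d,c] @ U2)"
      using Cons.prems(1)[of _ _ "x#_"] by simp
    show "?Q (A @ B)" using q .
    show "distinct (A @ B)" using Cons.prems(3) w by simp
    show "distinct w''" using Cons.prems(4) by simp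
    show "set w'' = set (A @ B)" using Cons.prems(3-5) w by auto
    fix u v assume "before (A @ B) u v" "before w'' v u"
    then have "before w u v" "before (x#w'') v u" using w by (auto simp: before_append)
    then show "Sw u v" using Cons.prems(6) by blast
  qed
qed

text \<open>Whether the edge between \<open>U @ [a,b] @ V\<close> and \<open>U @ [b,a] @ V\<close> is contracted depends only on
  its fence: squares allow us to permute \<open>U\<close> and \<open>V\<close> freely, and hexagons allow us to move a value
  outside \<open>[a,b]\<close> across the pair.\<close>

locale fence_uniformity =
  fixes m :: nat and R :: "(nat list \<times> nat list) set" and a b :: nat and L :: "nat set"
  assumes R: "lattice_cong m R" and ab: "a < b"
begin

definition contracted :: "nat list \<Rightarrow> nat list \<Rightarrow> bool" where
  "contracted U V \<longleftrightarrow> (U @ [a,b] @ V \<in> perms m \<longrightarrow> (U @ [a,b] @ V, U @ [b,a] @ V) \<in> R)"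

definition in_fence :: "nat list \<Rightarrow> nat list \<Rightarrow> bool" where
  "in_fence U V \<longleftrightarrow> U @ [a,b] @ V \<in> perms m \<and> L \<subseteq> set U \<and> {a<..<b} - L \<subseteq> set V"

lemma square_left:
  assumes "c < d" "U1 @ [c,d] @ U2 @ [a,b] @ V \<in> perms m"
  shows "(U1 @ [c,d] @ U2 @ [a,b] @ V, U1 @ [c,d] @ U2 @ [b,a] @ V) \<in> R \<longleftrightarrow>
         (U1 @ [d,c] @ U2 @ [a,b] @ V, U1 @ [d,c] @ U2 @ [b,a] @ V) \<in> R"
proof (rule lattice_cong_square[OF R])
  have d: "distinct (U1 @ [c,d] @ U2 @ [a,b] @ V)" using assms by (simp add: perms_def)
  show "U1 @ [c,d] @ U2 @ [a,b] @ V \<in> perms m" "U1 @ [c,d] @ U2 @ [b,a] @ V \<in> perms m"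
    "U1 @ [d,c] @ U2 @ [a,b] @ V \<in> perms m" "U1 @ [d,c] @ U2 @ [b,a] @ V \<in> perms m" using assms(2) by (auto simp: perms_def)
  have d1: "distinct ((U1 @ [c,d] @ U2) @ [a,b] @ V)" using d by simp
  have d2: "distinct (U1 @ [c,d] @ (U2 @ [a,b] @ V))" using d by simp
  have d3: "distinct ((U1 @ [d,c] @ U2) @ [a,b] @ V)" using d by auto
  note i1 = inversions_swap[OF d1 ab] and i2 = inversions_swap[OF d2 assms(1)] and i3 = inversions_swap[OF d3 ab]
  show "inversions (U1 @ [c,d] @ U2 @ [b,a] @ V) = insert (a,b) (inversions (U1 @ [c,d] @ U2 @ [a,b] @ V))"
    using i1 by simp
  show "inversions (U1 @ [d,c] @ U2 @ [a,b] @ V) = insert (c,d) (inversions (U1 @ [c,d] @ U2 @ [a,b] @ V))"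
    using i2 by simp
  show "inversions (U1 @ [d,c] @ U2 @ [b,a] @ V) = insert (a,b) (insert (c,d) (inversions (U1 @ [c,d] @ U2 @ [a,b] @ V)))"
    using i2 i3 by simp
  show "(a,b) \<notin> inversions (U1 @ [c,d] @ U2 @ [a,b] @ V)" using i1 by simp
  show "(c,d) \<notin> inversions (U1 @ [c,d] @ U2 @ [a,b] @ V)" using i2 by simp
  show "(a,b) \<noteq> (c,d)" using d by auto
qed

lemma square_right:
  assumes "c < d" "U @ [a,b] @ V1 @ [c,d] @ V2 \<in> perms m"
  shows "(U @ [a,b] @ V1 @ [c,d] @ V2, U @ [b,a] @ V1 @ [c,d] @ V2) \<in> R \<longleftrightarrow>
         (U @ [a,b] @ V1 @ [d,c] @ V2, U @ [b,a] @ V1 @ [d,c] @ V2) \<in> R"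
proof (rule lattice_cong_square[OF R])
  have d: "distinct (U @ [a,b] @ V1 @ [c,d] @ V2)" using assms by (simp add: perms_def)
  show "U @ [a,b] @ V1 @ [c,d] @ V2 \<in> perms m" "U @ [b,a] @ V1 @ [c,d] @ V2 \<in> perms m"
    "U @ [a,b] @ V1 @ [d,c] @ V2 \<in> perms m" "U @ [b,a] @ V1 @ [d,c] @ V2 \<in> perms m" using assms(2) by (auto simp: perms_def)
  have d1: "distinct (U @ [a,b] @ (V1 @ [c,d] @ V2))" using d by simp
  have d2: "distinct ((U @ [a,b] @ V1) @ [c,d] @ V2)" using d by simp
  have d3: "distinct (U @ [a,b] @ (V1 @ [d,c] @ V2))" using d by auto
  note i1 = inversions_swap[OF d1 ab] and i2 = inversions_swap[OF d2 assms(1)] and i3 = inversions_swap[OF d3 ab]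
  show "inversions (U @ [b,a] @ V1 @ [c,d] @ V2) = insert (a,b) (inversions (U @ [a,b] @ V1 @ [c,d] @ V2))"
    using i1 by simp
  show "inversions (U @ [a,b] @ V1 @ [d,c] @ V2) = insert (c,d) (inversions (U @ [a,b] @ V1 @ [c,d] @ V2))"
    using i2 by simp
  show "inversions (U @ [b,a] @ V1 @ [d,c] @ V2) = insert (a,b) (insert (c,d) (inversions (U @ [a,b] @ V1 @ [c,d] @ V2)))"
    using i2 i3 by simp
  show "(a,b) \<notin> inversions (U @ [a,b] @ V1 @ [c,d] @ V2)" using i1 by simp
  show "(c,d) \<notin> inversions (U @ [a,b] @ V1 @ [c,d] @ V2)" using i2 by simp
  show "(a,b) \<noteq> (c,d)" using d by auto
qed

lemma contracted_swap_left: "contracted (U1 @ [c,d] @ U2) V \<Longrightarrow> contracted (U1 @ [d,c] @ U2) V"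
proof -
  assume g: "contracted (U1 @ [c,d] @ U2) V"
  show "contracted (U1 @ [d,c] @ U2) V" unfolding contracted_def
  proof
    assume p: "(U1 @ [d,c] @ U2) @ [a,b] @ V \<in> perms m"
    then have p': "U1 @ [c,d] @ U2 @ [a,b] @ V \<in> perms m" by (auto simp: perms_def)
    then have e: "(U1 @ [c,d] @ U2 @ [a,b] @ V, U1 @ [c,d] @ U2 @ [b,a] @ V) \<in> R" using g by (simp add: contracted_def)
    have "c \<noteq> d" using p by (auto simp: perms_def)
    then consider "c < d" | "d < c" by arith
    then show "((U1 @ [d,c] @ U2) @ [a,b] @ V, (U1 @ [d,c] @ U2) @ [b,a] @ V) \<in> R"
    proof cases
      case 1 then show ?thesis using square_left[OF 1 p'] e by simp
    next
      case 2 then show ?thesis using square_left[OF 2, of U1 U2 V] p e by simp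
    qed
  qed
qed

lemma contracted_swap_right: "contracted U (V1 @ [c,d] @ V2) \<Longrightarrow> contracted U (V1 @ [d,c] @ V2)"
proof -
  assume g: "contracted U (V1 @ [c,d] @ V2)"
  show "contracted U (V1 @ [d,c] @ V2)" unfolding contracted_def
  proof
    assume p: "U @ [a,b] @ V1 @ [d,c] @ V2 \<in> perms m"
    then have p': "U @ [a,b] @ V1 @ [c,d] @ V2 \<in> perms m" by (auto simp: perms_def)
    then have e: "(U @ [a,b] @ V1 @ [c,d] @ V2, U @ [b,a] @ V1 @ [c,d] @ V2) \<in> R" using g by (simp add: contracted_def)
    have "c \<noteq> d" using p by (auto simp: perms_def)
    then consider "c < d" | "d < c" by arith
    then show "(U @ [a,b] @ V1 @ [d,c] @ V2, U @ [b,a] @ V1 @ [d,c] @ V2) \<in> R"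
    proof cases
      case 1 then show ?thesis using square_right[OF 1 p'] e by simp
    next
      case 2 then show ?thesis using square_right[OF 2, of U V1 V2] p e by simp
    qed
  qed
qed

lemma contracted_shift_past:
  assumes p: "X @ [c,a,b] @ Y \<in> perms m" and c: "c < a \<or> b < c"
  shows "contracted (X @ [c]) Y \<longleftrightarrow> contracted X (c#Y)"
proof -
  have p2: "X @ [a,b,c] @ Y \<in> perms m" using p by (auto simp: perms_def)
  consider "c < a" | "b < c" using c by blast
  then show ?thesis
  proof cases
    case 1
    interpret hexagon m X Y c a b using p 1 ab by unfold_locales auto
    show ?thesis unfolding contracted_def using p p2 contract_e123_e132[OF R] contract_e231_e321[OF R] by auto
  next
    case 2
    interpret hexagon m X Y a b c using p2 2 ab by unfold_locales auto
    show ?thesis unfolding contracted_def using p p2 contract_e123_e213[OF R] contract_e312_e321[OF R] by auto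
  qed
qed

lemma contracted_move_past:
  assumes "N @ T @ [a,b] @ V \<in> perms m" "\<forall>c\<in>set T. c < a \<or> b < c"
  shows "contracted (N @ T) V \<longleftrightarrow> contracted N (T @ V)"
  using assms
proof (induction T arbitrary: V rule: rev_induct)
  case Nil then show ?case by simp
next
  case (snoc c T)
  have "contracted (N @ T @ [c]) V \<longleftrightarrow> contracted (N @ T) (c#V)"
    using contracted_shift_past[of "N @ T" c V] snoc.prems by simp
  also have "\<dots> \<longleftrightarrow> contracted N (T @ c#V)"
  proof -
    have "N @ T @ [a,b] @ (c#V) \<in> perms m" using snoc.prems(1) by (auto simp: perms_def)
    then show ?thesis using snoc.IH[of "c#V"] snoc.prems by simp
  qed
  finally show ?case by simp
qed

lemma contracted_reorder_left:
  assumes "contracted U V" "distinct U" "distinct U'" "set U' = set U"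
  shows "contracted U' V"
  by (rule reorder_by_swaps[of "\<lambda>_ _. True" "\<lambda>Z. contracted Z V", OF _ assms(1-4)]) (auto intro: contracted_swap_left[simplified])

lemma contracted_reorder_right:
  assumes "contracted U V" "distinct V" "distinct V'" "set V' = set V"
  shows "contracted U V'"
  by (rule reorder_by_swaps[of "\<lambda>_ _. True" "\<lambda>Z. contracted U Z", OF _ assms(1-4)]) (auto intro: contracted_swap_right[simplified])

lemma contracted_normal_form:
  assumes "in_fence U V"
  shows "\<exists>N M. set N = L \<and> in_fence N M \<and> (contracted U V \<longleftrightarrow> contracted N M)"
proof -
  have p: "U @ [a,b] @ V \<in> perms m" and LU: "L \<subseteq> set U" and LV: "{a<..<b} - L \<subseteq> set V"
    using assms by (auto simp: in_fence_def)
  have d: "distinct (U @ [a,b] @ V)" using p by (simp add: perms_def)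
  define N where "N = filter (\<lambda>x. x \<in> L) U"
  define T where "T = filter (\<lambda>x. x \<notin> L) U"
  have sN: "set N = L" using LU unfolding N_def by auto
  have sU: "set (N @ T) = set U" unfolding N_def T_def by auto
  have dU: "distinct (N @ T)" using d unfolding N_def T_def by auto
  have p2: "N @ T @ [a,b] @ V \<in> perms m" using p d dU sU by (auto simp: perms_def)
  have g1: "contracted U V \<longleftrightarrow> contracted (N @ T) V"
    using contracted_reorder_left[of U V "N @ T"] contracted_reorder_left[of "N @ T" V U] d dU sU by auto
  have Tc: "\<forall>c\<in>set T. c < a \<or> b < c"
  proof
    fix c assume c: "c \<in> set T"
    then have "c \<in> set U" "c \<notin> L" unfolding T_def by auto
    moreover have "c \<noteq> a" "c \<noteq> b" "c \<notin> set V" using d \<open>c \<in> set U\<close> by auto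
    ultimately have "c \<notin> {a<..<b}" using LV by blast
    then show "c < a \<or> b < c" using \<open>c \<noteq> a\<close> \<open>c \<noteq> b\<close> by auto
  qed
  have g2: "contracted (N @ T) V \<longleftrightarrow> contracted N (T @ V)" using contracted_move_past[OF _ Tc] p2 by simp
  have "N @ [a,b] @ T @ V \<in> perms m" using p2 by (auto simp: perms_def)
  then have "in_fence N (T @ V)" unfolding in_fence_def using sN LV by auto
  then show ?thesis using sN g1 g2 by blast
qed

lemma contracted_normal_eq:
  assumes "in_fence N M" "in_fence N' M'" "set N = L" "set N' = L"
  shows "contracted N M \<longleftrightarrow> contracted N' M'"
proof -
  have d: "distinct (N @ [a,b] @ M)" "distinct (N' @ [a,b] @ M')" using assms by (auto simp: in_fence_def perms_def)
  have s: "set (N @ [a,b] @ M) = set (N' @ [a,b] @ M')" using assms by (auto simp: in_fence_def perms_def)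
  have sM: "set M = set M'"
  proof -
    have "set M = set (N @ [a,b] @ M) - L - {a,b}" using d assms(3) by auto
    also have "\<dots> = set (N' @ [a,b] @ M') - L - {a,b}" using s by simp
    also have "\<dots> = set M'" using d assms(4) by auto
    finally show ?thesis .
  qed
  have "contracted N M \<longleftrightarrow> contracted N' M"
    using contracted_reorder_left[of N M N'] contracted_reorder_left[of N' M N] d assms(3,4) by auto
  also have "\<dots> \<longleftrightarrow> contracted N' M'"
    using contracted_reorder_right[of N' M M'] contracted_reorder_right[of N' M' M] d sM by auto
  finally show ?thesis .
qed

lemma contracted_in_fence_eq: "in_fence U V \<Longrightarrow> in_fence U' V' \<Longrightarrow> contracted U V \<longleftrightarrow> contracted U' V'"
  using contracted_normal_form contracted_normal_eq by metis

end

lemma fences_of_contracted_edge: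
  assumes R: "lattice_cong m R" and p: "U @ [a,b] @ V \<in> perms m" and ab: "a < b"
    and e: "(U @ [a,b] @ V, U @ [b,a] @ V) \<in> R"
  shows "(a,b,{x\<in>{a<..<b}. x \<in> set U}) \<in> fences_of m R"
proof -
  define L where "L = {x\<in>{a<..<b}. x \<in> set U}"
  interpret fence_uniformity m R a b L using R ab by (rule fence_uniformity.intro)
  have ab1: "1 \<le> a" "b \<le> m" using p by (auto simp: perms_def)
  have c0: "in_fence U V" unfolding in_fence_def
  proof (intro conjI)
    show "U @ [a,b] @ V \<in> perms m" using p .
    show "L \<subseteq> set U" unfolding L_def by auto
    show "{a<..<b} - L \<subseteq> set V"
    proof
      fix x assume x: "x \<in> {a<..<b} - L"
      then have "x \<in> set (U @ [a,b] @ V)" using p ab1 by (auto simp: perms_def)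
      then show "x \<in> set V" using x unfolding L_def by auto
    qed
  qed
  have g0: "contracted U V" using e by (simp add: contracted_def)
  show ?thesis unfolding L_def[symmetric]
  proof (rule fences_ofI)
    fix U' V' assume "U' @ [a,b] @ V' \<in> perms m" "L \<subseteq> set U'" "{a<..<b} - L \<subseteq> set V'"
    then have "in_fence U' V'" by (simp add: in_fence_def)
    then have "contracted U' V'" using contracted_in_fence_eq[OF c0] g0 by blast
    then show "(U' @ [a,b] @ V', U' @ [b,a] @ V') \<in> R" using \<open>U' @ [a,b] @ V' \<in> perms m\<close> by (simp add: contracted_def)
  next
    show "is_fence m (a,b,L)" using ab ab1 unfolding is_fence_def L_def by auto
  qed
qed

lemma perm_with_triple:
  assumes "is_fence m (a,b,L)" "a < y" "y < b"
  obtains U V where "U @ [a,y,b] @ V \<in> perms m" "set U = L - {y}"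
proof -
  have ab: "1 \<le> a" "b \<le> m" "L \<subseteq> {a<..<b}" using assms(1) by (auto simp: is_fence_def)
  define U where "U = sorted_list_of_set (L - {y})"
  define V where "V = sorted_list_of_set ({1..m} - {a,b,y} - L)"
  have "finite L" using ab(3) finite_subset by blast
  then have sU: "set U = L - {y}" "distinct U" unfolding U_def by auto
  have sV: "set V = {1..m} - {a,b,y} - L" "distinct V" unfolding V_def by auto
  have "a \<notin> set U" "b \<notin> set U" "y \<notin> set U" using ab(3) unfolding sU(1) by auto
  moreover have "set U \<inter> set V = {}" unfolding sU(1) sV(1) by auto
  ultimately have "distinct (U @ [a,y,b] @ V)" using sU(2) sV assms(2,3) by auto
  moreover have "set (U @ [a,y,b] @ V) = {1..m}"
  proof -
    have "L \<subseteq> {1..m}" "a \<in> {1..m}" "b \<in> {1..m}" "y \<in> {1..m}" using ab assms(2,3) by auto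
    then show ?thesis unfolding set_append sU(1) sV(1) by auto
  qed
  ultimately show ?thesis using that sU(1) unfolding perms_def by blast
qed

text \<open>The hexagon on \<open>a < y < b\<close>: contracting either of its bottom edges contracts the edge swapping
  \<open>a\<close> and \<open>b\<close>, both with \<open>y\<close> to the left and with \<open>y\<close> to the right of the pair.\<close>

lemma fences_of_forced:
  assumes R: "lattice_cong m R" and f: "is_fence m (a,b,L)" and y: "a < y" "y < b"
    and h: "(a,y,L \<inter> {a<..<y}) \<in> fences_of m R \<or> (y,b,L \<inter> {y<..<b}) \<in> fences_of m R"
  shows "(a,b,L) \<in> fences_of m R"
proof -
  have ab: "a < b" "L \<subseteq> {a<..<b}" using f by (auto simp: is_fence_def)
  obtain U V where p: "U @ [a,y,b] @ V \<in> perms m" and sU: "set U = L - {y}"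
    using perm_with_triple[OF f y] .
  interpret hexagon m U V a y b using p y by unfold_locales auto
  have short: "(e123, e213) \<in> R \<or> (e123, e132) \<in> R"
  proof (cases "(a,y,L \<inter> {a<..<y}) \<in> fences_of m R")
    case True
    have "(U @ [a,y] @ (b#V), U @ [y,a] @ (b#V)) \<in> R"
      by (rule fences_of_contracts_edge[OF True]) (use p sU y ab in \<open>auto simp: perms_def\<close>)
    then show ?thesis by simp
  next
    case False
    then have h2: "(y,b,L \<inter> {y<..<b}) \<in> fences_of m R" using h by blast
    have "((U @ [a]) @ [y,b] @ V, (U @ [a]) @ [b,y] @ V) \<in> R"
      by (rule fences_of_contracts_edge[OF h2]) (use p sU y ab in \<open>auto simp: perms_def\<close>)
    then show ?thesis by simp
  qed
  show ?thesis
  proof (cases "y \<in> L")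
    case True
    have "(e213, e231) \<in> R" using short contract_e123_e213(3)[OF R] contract_e123_e132(1)[OF R] by blast
    then have e: "((U @ [y]) @ [a,b] @ V, (U @ [y]) @ [b,a] @ V) \<in> R" by simp
    have p2: "(U @ [y]) @ [a,b] @ V \<in> perms m" using hexagon_perms(1) by simp
    have "(a,b,{x\<in>{a<..<b}. x \<in> set (U @ [y])}) \<in> fences_of m R"
      using fences_of_contracted_edge[OF R p2 ab(1) e] .
    moreover have "{x\<in>{a<..<b}. x \<in> set (U @ [y])} = L" using sU True ab(2) by auto
    ultimately show ?thesis by simp
  next
    case False
    have "(e132, e312) \<in> R" using short contract_e123_e213(1)[OF R] contract_e123_e132(3)[OF R] by blast
    then have e: "(U @ [a,b] @ (y#V), U @ [b,a] @ (y#V)) \<in> R" by simp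
    have p2: "U @ [a,b] @ (y#V) \<in> perms m" using hexagon_perms(4) by simp
    have "(a,b,{x\<in>{a<..<b}. x \<in> set U}) \<in> fences_of m R"
      using fences_of_contracted_edge[OF R p2 ab(1) e] .
    moreover have "{x\<in>{a<..<b}. x \<in> set U} = L" using sU False ab(2) by auto
    ultimately show ?thesis by simp
  qed
qed

lemma fences_of_straddling:
  assumes R: "lattice_cong m R" and s: "(s, Suc s, {}) \<in> fences_of m R"
  shows "is_fence m (a,b,L) \<Longrightarrow> a \<le> s \<Longrightarrow> s < b \<Longrightarrow> (a,b,L) \<in> fences_of m R"
proof (induction "b - a" arbitrary: a b L rule: less_induct)
  case less
  have ab: "1 \<le> a" "a < b" "b \<le> m" "L \<subseteq> {a<..<b}" using less.prems by (auto simp: is_fence_def)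
  consider "a = s \<and> b = Suc s" | "a < s" | "a = s \<and> Suc s < b" using less.prems by arith
  then show ?case
  proof cases
    case 1
    then have "{a<..<b} = {}" by auto
    then have "L = {}" using ab by blast
    then show ?thesis using 1 s by simp
  next
    case 2
    have "(s,b,L \<inter> {s<..<b}) \<in> fences_of m R"
      by (rule less.hyps) (use 2 ab less.prems in \<open>auto simp: is_fence_def\<close>)
    then show ?thesis using fences_of_forced[OF R less.prems(1), of s] 2 less.prems by auto
  next
    case 3
    have "(a,Suc s,L \<inter> {a<..<Suc s}) \<in> fences_of m R"
      by (rule less.hyps) (use 3 ab less.prems in \<open>auto simp: is_fence_def\<close>)
    then show ?thesis using fences_of_forced[OF R less.prems(1), of "Suc s"] 3 less.prems by auto
  qed
qed

lemma exists_sorted_wrt: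
  assumes "finite S" "\<forall>x\<in>S. \<forall>y\<in>S. x \<noteq> y \<longrightarrow> r x y \<or> r y x"
    "\<forall>x\<in>S. \<forall>y\<in>S. \<forall>z\<in>S. r x y \<longrightarrow> r y z \<longrightarrow> r x z"
  shows "\<exists>zs. set zs = S \<and> sorted_wrt r zs"
  using assms
proof (induction S rule: finite_induct)
  case empty show ?case by (rule exI[of _ "[]"]) simp
next
  case (insert u F)
  have p1: "\<forall>x\<in>F. \<forall>y\<in>F. x \<noteq> y \<longrightarrow> r x y \<or> r y x" using insert.prems(1) by blast
  have p2: "\<forall>x\<in>F. \<forall>y\<in>F. \<forall>z\<in>F. r x y \<longrightarrow> r y z \<longrightarrow> r x z" using insert.prems(2) by blast
  obtain zs where zs: "set zs = F" "sorted_wrt r zs" using insert.IH[OF p1 p2] by blast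
  define zs' where "zs' = filter (\<lambda>v. r v u) zs @ [u] @ filter (\<lambda>v. r u v) zs"
  have "set zs' = insert u F"
  proof -
    have "\<forall>v\<in>F. r v u \<or> r u v" using insert.prems(1) insert.hyps(2) by (metis insertCI)
    then show ?thesis unfolding zs'_def using zs(1) by auto
  qed
  moreover have "sorted_wrt r zs'"
  proof -
    have c1: "\<forall>a\<in>set (filter (\<lambda>v. r v u) zs). \<forall>b\<in>set (filter (\<lambda>v. r u v) zs). r a b"
    proof (intro ballI)
      fix a b assume "a \<in> set (filter (\<lambda>v. r v u) zs)" "b \<in> set (filter (\<lambda>v. r u v) zs)"
      then have h: "a \<in> insert u F" "b \<in> insert u F" "r a u" "r u b" using zs(1) by auto
      show "r a b" by (rule insert.prems(2)[rule_format, OF h(1) insertI1 h(2) h(3) h(4)])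
    qed
    have s1: "sorted_wrt r (filter (\<lambda>v. r v u) zs)" "sorted_wrt r (filter (\<lambda>v. r u v) zs)"
      using zs(2) by (simp_all add: sorted_wrt_filter)
    have c2: "\<forall>a\<in>set (filter (\<lambda>v. r v u) zs). r a u" "\<forall>b\<in>set (filter (\<lambda>v. r u v) zs). r u b"
      by auto
    have eq: "sorted_wrt r (A @ [u] @ B) \<longleftrightarrow> sorted_wrt r A \<and> sorted_wrt r B \<and> (\<forall>y\<in>set B. r u y)
       \<and> (\<forall>x\<in>set A. r x u) \<and> (\<forall>x\<in>set A. \<forall>y\<in>set B. r x y)" for A B
      by (simp add: sorted_wrt_append) blast
    show ?thesis unfolding zs'_def eq using s1 c1 c2 by blast
  qed
  ultimately show ?case by blast
qed

lemma sorted_wrt_before: "sorted_wrt r zs \<Longrightarrow> before zs u v \<Longrightarrow> r u v"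
  by (induction zs) auto

lemma perm_of_strict_total_order:
  assumes total: "\<forall>u\<in>{1..m}. \<forall>v\<in>{1..m}. u \<noteq> v \<longrightarrow> r u v \<or> r v u"
    and trans: "\<forall>u\<in>{1..m}. \<forall>v\<in>{1..m}. \<forall>w\<in>{1..m}. r u v \<longrightarrow> r v w \<longrightarrow> r u w"
    and irrefl: "\<And>u. \<not> r u u" and field: "\<And>u v. r u v \<Longrightarrow> u \<in> {1..m} \<and> v \<in> {1..m}"
  obtains z where "z \<in> perms m" "\<And>u v. before z u v \<longleftrightarrow> r u v"
proof -
  obtain z where z: "set z = {1..m}" "sorted_wrt r z" using exists_sorted_wrt[OF _ total trans] by blast
  have "distinct z" using z(2) irrefl by (induction z) auto
  have "before z u v \<longleftrightarrow> r u v" for u v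
  proof
    assume "r u v"
    then have "u \<in> set z" "v \<in> set z" "u \<noteq> v" using z(1) irrefl field by auto
    then have "before z u v \<or> before z v u" using before_total[of u z v] by blast
    moreover have "\<not> r v u" using trans[rule_format, of u v u] irrefl field \<open>r u v\<close> by blast
    ultimately show "before z u v" using sorted_wrt_before[OF z(2)] by blast
  qed (rule sorted_wrt_before[OF z(2)])
  moreover have "z \<in> perms m" using z(1) \<open>distinct z\<close> unfolding perms_def by blast
  ultimately show ?thesis by (rule that[rotated])
qed

text \<open>The permutation lists \<open>u\<close> before \<open>v\<close> iff \<open>(u,v) \<in> T\<close> when \<open>u > v\<close>, and iff \<open>(v,u) \<notin> T\<close> when
  \<open>u < v\<close>; transitivity and cotransitivity of \<open>T\<close> make this a strict total order.\<close>

lemma perm_of_cotrans_rel: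
  assumes trans: "trans T" and field: "\<And>c d. (c,d) \<in> T \<Longrightarrow> d < c \<and> c \<in> {1..m} \<and> d \<in> {1..m}"
    and cotrans: "\<And>c d e. (c,d) \<in> T \<Longrightarrow> d < e \<Longrightarrow> e < c \<Longrightarrow> (c,e) \<in> T \<or> (e,d) \<in> T"
  obtains z where "z \<in> perms m" "inversions z = {(a,b). (b,a) \<in> T}"
proof -
  define r where "r u v \<longleftrightarrow> u \<in> {1..m} \<and> v \<in> {1..m} \<and> u \<noteq> v \<and> ((v < u \<and> (u,v) \<in> T) \<or> (u < v \<and> (v,u) \<notin> T))"
    for u v
  have rtr: "r u w" if uvw: "r u v" "r v w" for u v w
  proof (cases "u = w")
    case True
    then show ?thesis using uvw unfolding r_def by auto
  next
    case False
    consider "u < v" "v < w" | "v < u" "w < v" | "u < v" "w < v" | "v < u" "v < w"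
      using uvw unfolding r_def by auto
    then show ?thesis
    proof cases
      case 1
      then have "(w,u) \<notin> T" using uvw cotrans[of w u v] unfolding r_def by auto
      then show ?thesis using uvw 1 unfolding r_def by auto
    next
      case 2
      then show ?thesis using uvw transD[OF trans] unfolding r_def by auto
    next
      case 3
      then have h: "(v,u) \<notin> T" "(v,w) \<in> T" using uvw unfolding r_def by auto
      have "(w,u) \<notin> T" using h transD[OF trans, of v w u] by blast
      moreover have "(u,w) \<in> T" if "w < u" using cotrans[OF h(2) that] 3 h(1) by auto
      ultimately show ?thesis using uvw False unfolding r_def by auto
    next
      case 4
      then have h: "(u,v) \<in> T" "(w,v) \<notin> T" using uvw unfolding r_def by auto
      have "(w,u) \<notin> T" using h transD[OF trans, of w u v] by blast
      moreover have "(u,w) \<in> T" if "w < u" using cotrans[OF h(1) _ that] 4 h(2) by auto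
      ultimately show ?thesis using uvw False unfolding r_def by auto
    qed
  qed
  obtain z where z: "z \<in> perms m" "\<And>u v. before z u v \<longleftrightarrow> r u v"
  proof (rule perm_of_strict_total_order[of m r])
    show "\<forall>u\<in>{1..m}. \<forall>v\<in>{1..m}. u \<noteq> v \<longrightarrow> r u v \<or> r v u" unfolding r_def by auto
    show "\<forall>u\<in>{1..m}. \<forall>v\<in>{1..m}. \<forall>w\<in>{1..m}. r u v \<longrightarrow> r v w \<longrightarrow> r u w" using rtr by blast
  qed (simp_all add: r_def)
  have "a < b \<and> r b a \<longleftrightarrow> (b,a) \<in> T" for a b using field[of b a] unfolding r_def by auto
  then have "inversions z = {(a,b). (b,a) \<in> T}" unfolding inversions_before z(2) by auto
  then show ?thesis using that z(1) by blast
qed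

definition inversion_rel :: "nat list \<Rightarrow> nat rel" where
  "inversion_rel w = {(c,d). d < c \<and> before w c d}"

lemma inversions_inversion_rel: "inversions w = {(a,b). (b,a) \<in> inversion_rel w}"
  by (auto simp: inversions_before inversion_rel_def)

lemma inversion_rel_cotrans:
  assumes "w \<in> perms m" "(c,d) \<in> inversion_rel w" "d < e" "e < c"
  shows "(c,e) \<in> inversion_rel w \<or> (e,d) \<in> inversion_rel w"
proof -
  have "before w c d" using assms(2) unfolding inversion_rel_def by auto
  then have "c \<in> set w" "d \<in> set w" using before_set[of w c d] by auto
  then have "e \<in> set w" using assms(3,4) perms_set[OF assms(1)] by auto
  then have "before w e d \<or> before w d e" using before_total[of e w d] \<open>d \<in> set w\<close> assms(3) by blast
  then show ?thesis using before_trans[OF perms_distinct[OF assms(1)] \<open>before w c d\<close>] assms(3,4)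
    unfolding inversion_rel_def by auto
qed

lemma trancl_cotrans:
  assumes desc: "\<And>c d. (c,d) \<in> B \<Longrightarrow> d < (c::nat)"
    and cotrans: "\<And>c d e. (c,d) \<in> B \<Longrightarrow> d < e \<Longrightarrow> e < c \<Longrightarrow> (c,e) \<in> B \<or> (e,d) \<in> B"
  shows "(c,d) \<in> B\<^sup>+ \<Longrightarrow> d < e \<Longrightarrow> e < c \<Longrightarrow> (c,e) \<in> B\<^sup>+ \<or> (e,d) \<in> B\<^sup>+"
proof (induction arbitrary: e rule: trancl_induct)
  case (base d)
  then show ?case using cotrans by blast
next
  case (step y z)
  have "z < y" using desc step.hyps(2) by blast
  consider "e = y" | "e < y" | "y < e" by arith
  then show ?case
  proof cases
    case 1 then show ?thesis using step.hyps(1) by simp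
  next
    case 2
    then have "(y,e) \<in> B \<or> (e,z) \<in> B" using cotrans[OF step.hyps(2)] step.prems by simp
    then show ?thesis using step.hyps(1) by (meson trancl.trancl_into_trancl r_into_trancl)
  next
    case 3
    then have "(c,e) \<in> B\<^sup>+ \<or> (e,y) \<in> B\<^sup>+" using step.IH step.prems by simp
    then show ?thesis using step.hyps(2) by (meson trancl.trancl_into_trancl)
  qed
qed

text \<open>The join of \<open>x\<close> and \<open>y\<close> has as inversions the transitive closure of their inversions.\<close>

lemma is_join_exists:
  assumes x: "x \<in> perms m" and y: "y \<in> perms m"
  obtains z where "is_join m x y z"
proof -
  define B where "B = inversion_rel x \<union> inversion_rel y"
  have Bd: "d < c \<and> c \<in> {1..m} \<and> d \<in> {1..m}" if "(c,d) \<in> B" for c d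
    using that x y before_set perms_set unfolding B_def inversion_rel_def by fastforce
  have field: "d < c \<and> c \<in> {1..m} \<and> d \<in> {1..m}" if "(c,d) \<in> B\<^sup>+" for c d
    using that
  proof (induction rule: trancl_induct)
    case (step y z)
    then show ?case using Bd[OF step.hyps(2)] by auto
  qed (use Bd in blast)
  have "(c,e) \<in> B \<or> (e,d) \<in> B" if "(c,d) \<in> B" "d < e" "e < c" for c d e
    using that inversion_rel_cotrans[OF x, of c d e] inversion_rel_cotrans[OF y, of c d e] unfolding B_def by blast
  then have "(c,e) \<in> B\<^sup>+ \<or> (e,d) \<in> B\<^sup>+" if "(c,d) \<in> B\<^sup>+" "d < e" "e < c" for c d e
    using trancl_cotrans[of B, OF _ _ that] Bd by blast
  with field obtain z where z: "z \<in> perms m" "inversions z = {(a,b). (b,a) \<in> B\<^sup>+}"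
    using perm_of_cotrans_rel[OF trans_trancl[of B], of m] by blast
  have "is_join m x y z"
    unfolding is_join_def weak_le_def
  proof (intro conjI ballI impI)
    show "inversions x \<subseteq> inversions z" "inversions y \<subseteq> inversions z"
      unfolding z(2) by (auto simp: inversions_inversion_rel B_def)
    fix u assume u: "u \<in> perms m" "inversions x \<subseteq> inversions u \<and> inversions y \<subseteq> inversions u"
    have "B \<subseteq> inversion_rel u" using u unfolding B_def inversions_inversion_rel by auto
    moreover have "trans (inversion_rel u)"
      using before_trans[OF perms_distinct[OF u(1)]] unfolding trans_def inversion_rel_def by auto
    ultimately have "B\<^sup>+ \<subseteq> inversion_rel u" by (metis trancl_id trancl_mono subsetI)
    then show "inversions z \<subseteq> inversions u" unfolding z(2) by (auto simp: inversions_inversion_rel)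
  qed (rule z(1))
  then show ?thesis using that by blast
qed

definition weak_cover :: "nat list \<Rightarrow> nat list \<Rightarrow> bool" where
  "weak_cover w v \<longleftrightarrow> (\<exists>U a b V. a < b \<and> w = U @ [a,b] @ V \<and> v = U @ [b,a] @ V)"

definition cover_edges :: "(nat list \<times> nat list) set \<Rightarrow> (nat list \<times> nat list) set" where
  "cover_edges R = {(w,v). (w,v) \<in> R \<and> (weak_cover w v \<or> weak_cover v w)}"

lemma adjacent_pair_reversed:
  "before x u v \<Longrightarrow> \<not> before z u v \<Longrightarrow> distinct z \<Longrightarrow> set x \<subseteq> set z \<Longrightarrow>
   \<exists>U c d V. x = U @ [c,d] @ V \<and> \<not> before z c d"
proof (induction x arbitrary: u)
  case Nil then show ?case by simp
next
  case (Cons h x')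
  show ?case
  proof (cases "before x' u v")
    case True
    have "set x' \<subseteq> set z" using Cons.prems(4) by simp
    then obtain U c d V where "x' = U @ [c,d] @ V" "\<not> before z c d" using Cons.IH[OF True Cons.prems(2,3)] by blast
    then show ?thesis by (intro exI[of _ "h#U"]) auto
  next
    case False
    then have hu: "h = u" "v \<in> set x'" using Cons.prems by auto
    then obtain k x'' where x': "x' = k#x''" by (cases x') auto
    show ?thesis
    proof (cases "before z h k")
      case False then show ?thesis using x' by (intro exI[of _ "[]"]) auto
    next
      case True
      have "k \<noteq> v" using True Cons.prems(2) hu by auto
      then have "before x' k v" using x' hu by auto
      moreover have "\<not> before z k v" using before_trans[OF Cons.prems(3) True] Cons.prems(2) hu by auto
      ultimately obtain U c d V where "x' = U @ [c,d] @ V" "\<not> before z c d"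
        using Cons.IH[of k] Cons.prems by auto
      then show ?thesis by (intro exI[of _ "h#U"]) auto
    qed
  qed
qed

lemma weak_le_cover_step:
  assumes xz: "x \<in> perms m" "z \<in> perms m" and le: "weak_le x z" and ne: "x \<noteq> z"
  obtains U c d V where "c < d" "x = U @ [c,d] @ V" "(c,d) \<in> inversions z"
proof -
  have dx: "distinct x" "distinct z" "set x = set z" using xz by (auto simp: perms_def)
  have "inversions x \<noteq> inversions z" using ne inversions_inj[OF xz] by blast
  then obtain p q where pq: "(p,q) \<in> inversions z" "(p,q) \<notin> inversions x"
    using le unfolding weak_le_def by auto
  then have pq2: "p < q" "before z q p" "\<not> before x q p" unfolding inversions_before by auto
  then have "p \<in> set x" "q \<in> set x" using before_set[OF pq2(2)] dx by auto
  then have "before x p q" using before_total[of p x q] pq2 by auto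
  moreover have "\<not> before z p q" using before_asym[OF dx(2) pq2(2)] .
  ultimately obtain U c d V where x: "x = U @ [c,d] @ V" "\<not> before z c d"
    using adjacent_pair_reversed[OF _ _ dx(2)] dx by blast
  have cd: "c \<noteq> d" "c \<in> set z" "d \<in> set z" using dx x by auto
  then have "before z d c" using before_total[OF cd(2) cd(3) cd(1)] x(2) by blast
  moreover have "c < d"
  proof (rule ccontr)
    assume "\<not> c < d"
    then have "(d,c) \<in> inversions x" using cd unfolding inversions_before x(1) by (simp add: before_append)
    moreover have "(d,c) \<notin> inversions z" unfolding inversions_before using x(2) by simp
    ultimately show False using le unfolding weak_le_def by blast
  qed
  ultimately have "(c,d) \<in> inversions z" unfolding inversions_before by blast
  with \<open>c < d\<close> x(1) show ?thesis by (rule that)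
qed

lemma cover_chain_of_le:
  assumes R: "lattice_cong m R"
  shows "(x,z) \<in> R \<Longrightarrow> weak_le x z \<Longrightarrow> (x,z) \<in> (cover_edges R)\<^sup>*"
proof (induction "card (inversions z - inversions x)" arbitrary: x rule: less_induct)
  case less
  have xz: "x \<in> perms m" "z \<in> perms m" using lattice_cong_perms[OF R less.prems(1)] by auto
  show ?case
  proof (cases "x = z")
    case False
    obtain U c d V where cd: "c < d" "x = U @ [c,d] @ V" "(c,d) \<in> inversions z"
      by (rule weak_le_cover_step[OF xz less.prems(2) False])
    define x' where "x' = U @ [d,c] @ V"
    have ix': "inversions x' = insert (c,d) (inversions x)" "(c,d) \<notin> inversions x"
      using inversions_swap[of U c d V] perms_distinct[OF xz(1)] cd unfolding x'_def by auto
    have x'p: "x' \<in> perms m" using perms_swap[of U c d V m] xz(1) cd(2) unfolding x'_def by simp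
    have le1: "weak_le x x'" "weak_le x' z" using ix' cd(3) less.prems(2) unfolding weak_le_def by auto
    have r1: "(x,x') \<in> R" "(x',z) \<in> R" using lattice_cong_convex[OF R less.prems(1) x'p le1] by auto
    have "inversions z - inversions x' \<subset> inversions z - inversions x" using ix' cd(3) by auto
    then have "card (inversions z - inversions x') < card (inversions z - inversions x)"
      by (rule psubset_card_mono[OF finite_Diff[OF finite_inversions]])
    then have "(x',z) \<in> (cover_edges R)\<^sup>*" using less.hyps r1(2) le1(2) by blast
    moreover have "weak_cover x x'"
      unfolding weak_cover_def x'_def using cd(1,2) by (intro exI[of _ U] exI[of _ c] exI[of _ d] exI[of _ V]) simp
    then have "(x,x') \<in> cover_edges R" using r1(1) unfolding cover_edges_def by blast
    ultimately show ?thesis by simp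
  qed simp
qed

lemma cover_edges_sym: "(w,v) \<in> cover_edges R \<Longrightarrow> lattice_cong m R \<Longrightarrow> (v,w) \<in> cover_edges R"
  unfolding cover_edges_def using lattice_cong_sym by blast

lemma lattice_cong_cover_chain:
  assumes R: "lattice_cong m R" and xy: "(x,y) \<in> R"
  shows "(x,y) \<in> (cover_edges R)\<^sup>*"
proof -
  have p: "x \<in> perms m" "y \<in> perms m" using lattice_cong_perms[OF R xy] by auto
  obtain j where j: "is_join m x y j" using is_join_exists p by blast
  have le: "weak_le x j" "weak_le y j" using j by (auto simp: is_join_def)
  have "(x,j) \<in> R"
    using lattice_cong_join[OF R xy p(1) is_join_of_le[OF p(1)] is_join_commute[OF j]] by (simp add: weak_le_def)
  moreover have "(y,j) \<in> R"
    using lattice_cong_join[OF R lattice_cong_sym[OF R xy] p(2) is_join_of_le[OF p(2)] j] by (simp add: weak_le_def)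
  ultimately have c: "(x,j) \<in> (cover_edges R)\<^sup>*" "(y,j) \<in> (cover_edges R)\<^sup>*" using cover_chain_of_le[OF R] le by auto
  have "(j,y) \<in> (cover_edges R)\<^sup>*"
    using c(2) by (induction rule: rtrancl_induct) (auto intro: cover_edges_sym[OF _ R] converse_rtrancl_into_rtrancl)
  then show ?thesis using c(1) by simp
qed

locale quotient_product_map =
  fixes m s k :: nat and R A B :: "(nat list \<times> nat list) set" and \<phi>A \<phi>B :: "nat list \<Rightarrow> nat list"
  assumes eqR: "equiv (perms m) R" and eqA: "equiv (perms s) A" and eqB: "equiv (perms k) B"
    and maps: "\<And>w. w \<in> perms m \<Longrightarrow> \<phi>A w \<in> perms s \<and> \<phi>B w \<in> perms k"
    and cong_iff: "\<And>x y. x \<in> perms m \<Longrightarrow> y \<in> perms m \<Longrightarrow>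
               (x,y) \<in> R \<longleftrightarrow> (\<phi>A x, \<phi>A y) \<in> A \<and> (\<phi>B x, \<phi>B y) \<in> B"
    and surj: "\<And>p q. p \<in> perms s \<Longrightarrow> q \<in> perms k \<Longrightarrow> \<exists>w\<in>perms m. \<phi>A w = p \<and> \<phi>B w = q"
    and mono: "\<And>x y. x \<in> perms m \<Longrightarrow> y \<in> perms m \<Longrightarrow> weak_le x y \<Longrightarrow>
               weak_le (\<phi>A x) (\<phi>A y) \<and> weak_le (\<phi>B x) (\<phi>B y)"
    and lift: "\<And>p p' q q'. p \<in> perms s \<Longrightarrow> p' \<in> perms s \<Longrightarrow> q \<in> perms k \<Longrightarrow> q' \<in> perms k \<Longrightarrow>
               weak_le p p' \<Longrightarrow> weak_le q q' \<Longrightarrow>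
               \<exists>w w'. w \<in> perms m \<and> w' \<in> perms m \<and> \<phi>A w = p \<and> \<phi>B w = q \<and> \<phi>A w' = p' \<and> \<phi>B w' = q'
                 \<and> weak_le w w'"
begin

definition class_map :: "nat list set \<Rightarrow> nat list set \<times> nat list set" where
  "class_map X = (A``{\<phi>A (SOME x. x \<in> X)}, B``{\<phi>B (SOME x. x \<in> X)})"

lemma quot_elem_perms: "X \<in> quot m R \<Longrightarrow> x \<in> X \<Longrightarrow> x \<in> perms m"
  using eqR unfolding quot_def by (meson in_quotient_imp_subset subsetD)

lemma quot_class: "X \<in> quot m R \<Longrightarrow> x \<in> X \<Longrightarrow> X = R``{x}"
  using eqR unfolding quot_def by (metis Image_singleton_iff equiv_class_eq quotientE)

lemma class_map_eq:
  assumes X: "X \<in> quot m R" "x \<in> X"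
  shows "class_map X = (A``{\<phi>A x}, B``{\<phi>B x})"
proof -
  define x' where "x' = (SOME x. x \<in> X)"
  have "x' \<in> X" unfolding x'_def using X(2) by (rule someI)
  then have "(x,x') \<in> R" using quot_class[OF X] by auto
  then have "(\<phi>A x, \<phi>A x') \<in> A" "(\<phi>B x, \<phi>B x') \<in> B"
    using cong_iff quot_elem_perms X \<open>x' \<in> X\<close> by blast+
  then show ?thesis unfolding class_map_def x'_def[symmetric]
    using equiv_class_eq[OF eqA] equiv_class_eq[OF eqB] by auto
qed

lemma self_mem_class: "x \<in> perms m \<Longrightarrow> x \<in> R``{x}"
  using eqR equiv_class_self by metis

lemma class_map_class: "x \<in> perms m \<Longrightarrow> class_map (R``{x}) = (A``{\<phi>A x}, B``{\<phi>B x})"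
  using class_map_eq[OF _ self_mem_class] unfolding quot_def by (simp add: quotientI)

lemma inj_on_class_map: "inj_on class_map (quot m R)"
proof (rule inj_onI)
  fix X Y assume XY: "X \<in> quot m R" "Y \<in> quot m R" "class_map X = class_map Y"
  obtain x y where xy: "x \<in> perms m" "X = R``{x}" "y \<in> perms m" "Y = R``{y}"
    using XY(1,2) unfolding quot_def by (auto elim!: quotientE)
  then have "A``{\<phi>A x} = A``{\<phi>A y}" "B``{\<phi>B x} = B``{\<phi>B y}" using XY(3) class_map_class by auto
  then have "(\<phi>A x, \<phi>A y) \<in> A" "(\<phi>B x, \<phi>B y) \<in> B"
    using eq_equiv_class_iff[OF eqA] eq_equiv_class_iff[OF eqB] maps xy by blast+
  then have "(x,y) \<in> R" using cong_iff xy by blast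
  then show "X = Y" using xy equiv_class_eq[OF eqR] by simp
qed

lemma class_map_image: "class_map ` quot m R = quot s A \<times> quot k B"
proof
  show "class_map ` quot m R \<subseteq> quot s A \<times> quot k B"
  proof
    fix Z assume "Z \<in> class_map ` quot m R"
    then obtain x where x: "x \<in> perms m" "Z = class_map (R``{x})" unfolding quot_def by (auto elim!: quotientE)
    then show "Z \<in> quot s A \<times> quot k B"
      using maps[OF x(1)] class_map_class[OF x(1)] unfolding quot_def by (auto intro: quotientI)
  qed
next
  show "quot s A \<times> quot k B \<subseteq> class_map ` quot m R"
  proof
    fix Z assume "Z \<in> quot s A \<times> quot k B"
    then obtain p q where pq: "p \<in> perms s" "q \<in> perms k" "Z = (A``{p}, B``{q})"
      unfolding quot_def by (auto elim!: quotientE)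
    obtain w where w: "w \<in> perms m" "\<phi>A w = p" "\<phi>B w = q" using surj pq by blast
    then have "R``{w} \<in> quot m R" "class_map (R``{w}) = Z" using class_map_class pq
      unfolding quot_def by (auto intro: quotientI)
    then show "Z \<in> class_map ` quot m R" by blast
  qed
qed

lemma quot_le_class_map:
  assumes XY: "X \<in> quot m R" "Y \<in> quot m R"
  shows "quot_le X Y \<longleftrightarrow> prod_le quot_le quot_le (class_map X) (class_map Y)"
proof
  assume "quot_le X Y"
  then obtain x y where h: "x \<in> X" "y \<in> Y" "weak_le x y" unfolding quot_le_def by blast
  have xy: "x \<in> perms m" "y \<in> perms m" using quot_elem_perms XY h by auto
  have "\<phi>A x \<in> A``{\<phi>A x}" "\<phi>B x \<in> B``{\<phi>B x}" "\<phi>A y \<in> A``{\<phi>A y}" "\<phi>B y \<in> B``{\<phi>B y}"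
    using maps xy equiv_class_self eqA eqB by metis+
  then show "prod_le quot_le quot_le (class_map X) (class_map Y)"
    using class_map_eq XY h mono[OF xy h(3)] unfolding prod_le_def quot_le_def by auto
next
  assume le: "prod_le quot_le quot_le (class_map X) (class_map Y)"
  obtain x y where xy: "x \<in> perms m" "X = R``{x}" "y \<in> perms m" "Y = R``{y}"
    using XY unfolding quot_def by (auto elim!: quotientE)
  obtain p p' q q' where h: "(\<phi>A x, p) \<in> A" "(\<phi>A y, p') \<in> A" "weak_le p p'"
    "(\<phi>B x, q) \<in> B" "(\<phi>B y, q') \<in> B" "weak_le q q'"
    using le unfolding prod_le_def quot_le_def xy class_map_class[OF xy(1)] class_map_class[OF xy(3)] by auto
  have "p \<in> perms s" "p' \<in> perms s" "q \<in> perms k" "q' \<in> perms k"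
    using h eqA eqB unfolding equiv_def refl_on_def by blast+
  then obtain w w' where w: "w \<in> perms m" "w' \<in> perms m" "\<phi>A w = p" "\<phi>B w = q" "\<phi>A w' = p'" "\<phi>B w' = q'"
    "weak_le w w'" using lift h(3,6) by blast
  have "(x,w) \<in> R" "(y,w') \<in> R" using cong_iff xy w h by auto
  then show "quot_le X Y" unfolding quot_le_def using xy w by blast
qed

theorem order_iso_quotient_product:
  "order_iso (quot m R) quot_le (quot s A \<times> quot k B) (prod_le quot_le quot_le)"
  unfolding order_iso_def bij_betw_def using inj_on_class_map class_map_image quot_le_class_map by blast

end

lemma order_iso_sym:
  assumes "order_iso P leP Q leQ" shows "order_iso Q leQ P leP"
proof -
  obtain f where f: "bij_betw f P Q" "\<forall>x\<in>P. \<forall>y\<in>P. leP x y \<longleftrightarrow> leQ (f x) (f y)"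
    using assms unfolding order_iso_def by blast
  define g where "g = the_inv_into P f"
  have g: "bij_betw g Q P" unfolding g_def using f(1) bij_betw_the_inv_into by blast
  have fg: "y \<in> Q \<Longrightarrow> f (g y) = y" for y unfolding g_def using f(1)
    by (meson bij_betw_def f_the_inv_into_f_bij_betw)
  have "\<forall>x\<in>Q. \<forall>y\<in>Q. leQ x y \<longleftrightarrow> leP (g x) (g y)"
  proof (intro ballI)
    fix x y assume xy: "x \<in> Q" "y \<in> Q"
    then have "g x \<in> P" "g y \<in> P" using g bij_betwE by blast+
    then have "leP (g x) (g y) \<longleftrightarrow> leQ (f (g x)) (f (g y))" using f(2) by blast
    then show "leQ x y \<longleftrightarrow> leP (g x) (g y)" using fg xy by simp
  qed
  then show ?thesis unfolding order_iso_def using g by blast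
qed

lemma order_iso_trans:
  assumes "order_iso P leP Q leQ" "order_iso Q leQ S leS" shows "order_iso P leP S leS"
proof -
  obtain f where f: "bij_betw f P Q" "\<forall>x\<in>P. \<forall>y\<in>P. leP x y \<longleftrightarrow> leQ (f x) (f y)"
    using assms(1) unfolding order_iso_def by blast
  obtain g where g: "bij_betw g Q S" "\<forall>x\<in>Q. \<forall>y\<in>Q. leQ x y \<longleftrightarrow> leS (g x) (g y)"
    using assms(2) unfolding order_iso_def by blast
  have "\<forall>x\<in>P. \<forall>y\<in>P. leP x y \<longleftrightarrow> leS ((g \<circ> f) x) ((g \<circ> f) y)"
  proof (intro ballI)
    fix x y assume "x \<in> P" "y \<in> P"
    then show "leP x y \<longleftrightarrow> leS ((g \<circ> f) x) ((g \<circ> f) y)" using f g(2) bij_betwE[OF f(1)] by simp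
  qed
  then show ?thesis using bij_betw_trans[OF f(1) g(1)] unfolding order_iso_def by blast
qed

text \<open>The two factors of a permutation of \<open>[m]\<close> are its restriction \<open>low\<close> to the values \<open>\<le> s\<close> and its
  restriction \<open>high\<close> to the values \<open>\<ge> t\<close>, shifted down to \<open>[m+1-t]\<close>: for \<open>t = s + 1\<close> they split \<open>[m]\<close>,
  for \<open>t = s\<close> they overlap in \<open>s\<close>.\<close>

locale product_decomposition =
  fixes m s t :: nat and R A B :: "(nat list \<times> nat list) set"
  assumes s1: "1 \<le> s" and sm: "s \<le> m" and t: "t = s \<or> t = Suc s" and tm: "t \<le> m"
    and R: "lattice_cong m R" and A: "lattice_cong s A" and B: "lattice_cong (m+1-t) B"
    and straddling_contracted: "\<And>U c d V. U @ [c,d] @ V \<in> perms m \<Longrightarrow> c < t \<Longrightarrow> s < d \<Longrightarrow>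
               (U @ [c,d] @ V, U @ [d,c] @ V) \<in> R"
    and fences_low: "\<And>a b L. 1 \<le> a \<Longrightarrow> a < b \<Longrightarrow> b \<le> s \<Longrightarrow> L \<subseteq> {a<..<b} \<Longrightarrow>
               ((a,b,L) \<in> fences_of s A \<longleftrightarrow> (a,b,L) \<in> fences_of m R)"
    and fences_high: "\<And>a b L. 1 \<le> a \<Longrightarrow> a < b \<Longrightarrow> b \<le> m+1-t \<Longrightarrow> L \<subseteq> {a<..<b} \<Longrightarrow>
               ((a,b,L) \<in> fences_of (m+1-t) B \<longleftrightarrow> shift_fence (t-1) (a,b,L) \<in> fences_of m R)"
    and embed_low: "\<And>p q. p \<in> perms s \<Longrightarrow> q \<in> perms (m+1-t) \<Longrightarrow>
               \<exists>X Y. X @ p @ Y \<in> perms m \<and> filter (\<lambda>x. t \<le> x) (X @ p @ Y) = map (\<lambda>x. x + (t-1)) q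
                 \<and> (\<forall>x\<in>set X \<union> set Y. s < x)"
    and embed_high: "\<And>p q. p \<in> perms s \<Longrightarrow> q \<in> perms (m+1-t) \<Longrightarrow>
               \<exists>X Y. X @ map (\<lambda>x. x + (t-1)) q @ Y \<in> perms m \<and> filter (\<lambda>x. x \<le> s) (X @ map (\<lambda>x. x + (t-1)) q @ Y) = p
                 \<and> (\<forall>x\<in>set X \<union> set Y. x < t)"
    and lift_le: "\<And>p p' q q'. p \<in> perms s \<Longrightarrow> p' \<in> perms s \<Longrightarrow> q \<in> perms (m+1-t) \<Longrightarrow> q' \<in> perms (m+1-t) \<Longrightarrow>
               weak_le p p' \<Longrightarrow> weak_le q q' \<Longrightarrow>
               \<exists>w w'. w \<in> perms m \<and> w' \<in> perms m \<and> filter (\<lambda>x. x \<le> s) w = p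
                 \<and> map (\<lambda>x. x - (t-1)) (filter (\<lambda>x. t \<le> x) w) = q
                 \<and> filter (\<lambda>x. x \<le> s) w' = p' \<and> map (\<lambda>x. x - (t-1)) (filter (\<lambda>x. t \<le> x) w') = q'
                 \<and> weak_le w w'"
begin

definition low :: "nat list \<Rightarrow> nat list" where "low w = filter (\<lambda>x. x \<le> s) w"
definition high :: "nat list \<Rightarrow> nat list" where "high w = map (\<lambda>x. x - (t-1)) (filter (\<lambda>x. t \<le> x) w)"

abbreviation "k \<equiv> m + 1 - t"

lemma t_bounds: "1 \<le> t" "s \<le> t" "t \<le> Suc s" using t s1 by auto

lemma inj_on_unshift: "inj_on (\<lambda>x. x - (t-1)) {x. t \<le> x}"
  unfolding inj_on_def using t_bounds by auto

lemma low_perms: "w \<in> perms m \<Longrightarrow> low w \<in> perms s"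
  unfolding low_def perms_def using sm by auto

lemma high_perms: "w \<in> perms m \<Longrightarrow> high w \<in> perms k"
proof -
  assume w: "w \<in> perms m"
  have d: "distinct (filter (\<lambda>x. t \<le> x) w)" using w by (simp add: perms_def)
  have "inj_on (\<lambda>x. x - (t-1)) (set (filter (\<lambda>x. t \<le> x) w))"
    using inj_on_unshift by (rule inj_on_subset) auto
  then have d2: "distinct (high w)" unfolding high_def using d by (simp add: distinct_map)
  have "set (high w) = (\<lambda>x. x - (t-1)) ` {t..m}" unfolding high_def using w t_bounds
    by (auto simp: perms_def)
  also have "\<dots> = {1..k}"
  proof
    show "(\<lambda>x. x - (t-1)) ` {t..m} \<subseteq> {1..k}" using t_bounds by auto
    show "{1..k} \<subseteq> (\<lambda>x. x - (t-1)) ` {t..m}"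
    proof
      fix y assume "y \<in> {1..k}"
      then have "y + (t-1) \<in> {t..m}" "y = y + (t-1) - (t-1)" using t_bounds tm by auto
      then show "y \<in> (\<lambda>x. x - (t-1)) ` {t..m}" by blast
    qed
  qed
  finally show ?thesis using d2 by (simp add: perms_def)
qed

lemma low_high_mono:
  assumes "x \<in> perms m" "y \<in> perms m" "weak_le x y"
  shows "weak_le (low x) (low y) \<and> weak_le (high x) (high y)"
proof
  show "weak_le (low x) (low y)"
    using assms(3) unfolding weak_le_def low_def inversions_before by (auto simp: before_filter)
  show "weak_le (high x) (high y)" unfolding weak_le_def
  proof
    fix e assume e: "e \<in> inversions (high x)"
    obtain a' b' where ab': "e = (a',b')" by (cases e)
    then have h: "a' < b'" "before (high x) b' a'" using e unfolding inversions_before by auto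
    then obtain b a where ba: "b' = b - (t-1)" "a' = a - (t-1)" "before (filter (\<lambda>x. t \<le> x) x) b a"
      unfolding high_def before_map by blast
    then have q: "t \<le> a" "t \<le> b" "before x b a" by (auto simp: before_filter)
    have "a < b" using h ba q by simp
    then have "(a,b) \<in> inversions y" using assms(3) q unfolding weak_le_def inversions_before by auto
    then have "before (filter (\<lambda>x. t \<le> x) y) b a" using q by (simp add: inversions_before before_filter)
    then have "before (high y) b' a'" unfolding high_def before_map using ba by blast
    then show "e \<in> inversions (high y)" using ab' h by (simp add: inversions_before)
  qed
qed

lemma high_eq_imp_filter_eq:
  assumes "high w = high w'" shows "filter (\<lambda>x. t \<le> x) w = filter (\<lambda>x. t \<le> x) w'"
proof (rule map_inj_on)
  show "map (\<lambda>x. x - (t-1)) (filter (\<lambda>x. t \<le> x) w) = map (\<lambda>x. x - (t-1)) (filter (\<lambda>x. t \<le> x) w')"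
    using assms unfolding high_def .
  show "inj_on (\<lambda>x. x - (t-1)) (set (filter (\<lambda>x. t \<le> x) w) \<union> set (filter (\<lambda>x. t \<le> x) w'))"
    using inj_on_unshift by (rule inj_on_subset) auto
qed

text \<open>Permutations with the same factors differ only in the relative order of values \<open>< t\<close> and \<open>> s\<close>,
  and every adjacent swap of two such values is contracted.\<close>

lemma cong_of_same_low_high:
  assumes w: "w \<in> perms m" "w' \<in> perms m" and e: "low w = low w'" "high w = high w'"
  shows "(w,w') \<in> R"
proof -
  define Sw where "Sw c d \<longleftrightarrow> (c < t \<and> s < d) \<or> (d < t \<and> s < c)" for c d :: nat
  define Q where "Q z \<longleftrightarrow> (z \<in> perms m \<longrightarrow> (w,z) \<in> R)" for z
  have fQ: "filter (\<lambda>x. t \<le> x) w = filter (\<lambda>x. t \<le> x) w'" using high_eq_imp_filter_eq e(2) .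
  have fP: "filter (\<lambda>x. x \<le> s) w = filter (\<lambda>x. x \<le> s) w'" using e(1) unfolding low_def .
  have dw: "distinct w" "distinct w'" "set w' = set w" using w by (auto simp: perms_def)
  have "Q w'"
  proof (rule reorder_by_swaps[of Sw Q])
    fix U1 c d U2 assume sw: "Sw c d" and q: "Q (U1 @ [c,d] @ U2)"
    show "Q (U1 @ [d,c] @ U2)" unfolding Q_def
    proof
      assume p': "U1 @ [d,c] @ U2 \<in> perms m"
      then have p: "U1 @ [c,d] @ U2 \<in> perms m" using perms_swap by fastforce
      then have r1: "(w, U1 @ [c,d] @ U2) \<in> R" using q unfolding Q_def by blast
      have "(U1 @ [c,d] @ U2, U1 @ [d,c] @ U2) \<in> R"
      proof (cases "c < t \<and> s < d")
        case True then show ?thesis using straddling_contracted[OF p] by blast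
      next
        case False
        then have "d < t" "s < c" using sw unfolding Sw_def by auto
        then show ?thesis using straddling_contracted[OF p'] lattice_cong_sym[OF R] by blast
      qed
      then show "(w, U1 @ [d,c] @ U2) \<in> R" using lattice_cong_trans[OF R r1] by blast
    qed
  next
    show "Q w" unfolding Q_def using lattice_cong_refl[OF R] by blast
    show "distinct w" "distinct w'" "set w' = set w" using dw by auto
  next
    fix x y assume b: "before w x y" "before w' y x"
    have xy: "x \<in> {1..m}" "y \<in> {1..m}" using before_set[OF b(1)] w by (auto simp: perms_def)
    have "\<not> (x \<le> s \<and> y \<le> s)"
    proof
      assume h: "x \<le> s \<and> y \<le> s"
      then have "before (filter (\<lambda>x. x \<le> s) w) x y" using b by (simp add: before_filter)
      then have "before w' x y" using fP by (simp add: before_filter)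
      then show False using before_asym[OF dw(2)] b(2) by blast
    qed
    moreover have "\<not> (t \<le> x \<and> t \<le> y)"
    proof
      assume h: "t \<le> x \<and> t \<le> y"
      then have "before (filter (\<lambda>x. t \<le> x) w) x y" using b by (simp add: before_filter)
      then have "before w' x y" using fQ by (simp add: before_filter)
      then show False using before_asym[OF dw(2)] b(2) by blast
    qed
    ultimately show "Sw x y" unfolding Sw_def using t_bounds by auto
  qed
  then show ?thesis using w unfolding Q_def by blast
qed

lemma low_cover_cong:
  assumes u: "U @ [a,b] @ V \<in> perms m" and ab: "a < b" and e: "(U @ [a,b] @ V, U @ [b,a] @ V) \<in> R"
  shows "(low (U @ [a,b] @ V), low (U @ [b,a] @ V)) \<in> A"
proof (cases "b \<le> s")
  case True
  define L where "L = {x\<in>{a<..<b}. x \<in> set U}"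
  have fR: "(a,b,L) \<in> fences_of m R" unfolding L_def using fences_of_contracted_edge[OF R u ab e] .
  have a1: "1 \<le> a" using u by (auto simp: perms_def)
  have Lsub: "L \<subseteq> {a<..<b}" unfolding L_def by auto
  have fA: "(a,b,L) \<in> fences_of s A" using fences_low[OF a1 ab True Lsub] fR by simp
  have p: "filter (\<lambda>x. x \<le> s) U @ [a,b] @ filter (\<lambda>x. x \<le> s) V \<in> perms s"
    using low_perms[OF u] True ab unfolding low_def by simp
  have "L = {x\<in>{a<..<b}. x \<in> set (filter (\<lambda>x. x \<le> s) U)}" unfolding L_def using True by auto
  from fences_of_contracts_edge[OF fA p this] show ?thesis unfolding low_def using True ab by simp
next
  case False
  then have "low (U @ [a,b] @ V) = low (U @ [b,a] @ V)" unfolding low_def by simp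
  then show ?thesis using lattice_cong_refl[OF A low_perms[OF u]] by simp
qed

lemma high_cover_cong:
  assumes u: "U @ [a,b] @ V \<in> perms m" and ab: "a < b" and e: "(U @ [a,b] @ V, U @ [b,a] @ V) \<in> R"
  shows "(high (U @ [a,b] @ V), high (U @ [b,a] @ V)) \<in> B"
proof (cases "t \<le> a")
  case True
  define L where "L = {x\<in>{a<..<b}. x \<in> set U}"
  have fR: "(a,b,L) \<in> fences_of m R" unfolding L_def using fences_of_contracted_edge[OF R u ab e] .
  have bm: "b \<le> m" using u by (auto simp: perms_def)
  define g where "g x = x - (t-1)" for x :: nat
  define L' where "L' = g ` L"
  have sh: "shift_fence (t-1) (g a, g b, L') = (a,b,L)"
  proof -
    have "(\<lambda>x. x + (t-1)) ` L' = L" unfolding L'_def g_def image_image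
    proof -
      have "\<forall>x\<in>L. x - (t-1) + (t-1) = x" using True unfolding L_def by auto
      then show "(\<lambda>x. x - (t-1) + (t-1)) ` L = L" by (simp add: image_cong)
    qed
    moreover have "a - (t-1) + (t-1) = a" "b - (t-1) + (t-1) = b" using True ab t_bounds by auto
    ultimately show ?thesis unfolding shift_fence_def g_def by simp
  qed
  have L'sub: "L' \<subseteq> {g a<..<g b}" unfolding L'_def L_def g_def using True t_bounds by auto
  have fB: "(g a, g b, L') \<in> fences_of k B"
    using fences_high[of "g a" "g b" L'] L'sub sh fR True ab bm t_bounds unfolding g_def by auto
  have p: "map g (filter (\<lambda>x. t \<le> x) U) @ [g a, g b] @ map g (filter (\<lambda>x. t \<le> x) V) \<in> perms k"
    using high_perms[OF u] True ab unfolding high_def g_def by simp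
  have "L' = {x\<in>{g a<..<g b}. x \<in> set (map g (filter (\<lambda>x. t \<le> x) U))}"
  proof
    show "L' \<subseteq> {x\<in>{g a<..<g b}. x \<in> set (map g (filter (\<lambda>x. t \<le> x) U))}"
      using L'sub True unfolding L'_def L_def by auto
    show "{x\<in>{g a<..<g b}. x \<in> set (map g (filter (\<lambda>x. t \<le> x) U))} \<subseteq> L'"
    proof
      fix x assume "x \<in> {x\<in>{g a<..<g b}. x \<in> set (map g (filter (\<lambda>x. t \<le> x) U))}"
      then obtain y where y: "x = g y" "y \<in> set U" "t \<le> y" "g a < g y" "g y < g b" by auto
      have "a < y" using True y(3,4) t_bounds unfolding g_def by arith
      moreover have "y < b" using True y(3,5) t_bounds unfolding g_def by arith
      ultimately show "x \<in> L'" unfolding L'_def L_def using y by auto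
    qed
  qed
  from fences_of_contracts_edge[OF fB p this] show ?thesis unfolding high_def g_def using True ab by simp
next
  case False
  then have "high (U @ [a,b] @ V) = high (U @ [b,a] @ V)" unfolding high_def by simp
  then show ?thesis using lattice_cong_refl[OF B high_perms[OF u]] by simp
qed

lemma low_high_cong_of_cong:
  assumes "(w,w') \<in> R"
  shows "(low w, low w') \<in> A \<and> (high w, high w') \<in> B"
proof -
  have "(w,w') \<in> (cover_edges R)\<^sup>*" using lattice_cong_cover_chain[OF R assms] .
  then show ?thesis
  proof (induction rule: rtrancl_induct)
    case base
    have "w \<in> perms m" using lattice_cong_perms[OF R assms] by blast
    then show ?case using lattice_cong_refl[OF A low_perms] lattice_cong_refl[OF B high_perms] by blast
  next
    case (step u v)
    have uv: "(u,v) \<in> R" "weak_cover u v \<or> weak_cover v u" using step.hyps(2) unfolding cover_edges_def by auto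
    have "(low u, low v) \<in> A \<and> (high u, high v) \<in> B"
    proof (cases "weak_cover u v")
      case True
      then obtain U a b V where d: "a < b" "u = U @ [a,b] @ V" "v = U @ [b,a] @ V" unfolding weak_cover_def by blast
      have "u \<in> perms m" using lattice_cong_perms[OF R uv(1)] by blast
      then show ?thesis using low_cover_cong high_cover_cong d uv(1) by blast
    next
      case False
      then obtain U a b V where d: "a < b" "v = U @ [a,b] @ V" "u = U @ [b,a] @ V" using uv unfolding weak_cover_def by blast
      have vu: "(v,u) \<in> R" using lattice_cong_sym[OF R uv(1)] .
      have "v \<in> perms m" using lattice_cong_perms[OF R uv(1)] by blast
      then have "(low v, low u) \<in> A \<and> (high v, high u) \<in> B" using low_cover_cong high_cover_cong d vu by blast
      then show ?thesis using lattice_cong_sym[OF A] lattice_cong_sym[OF B] by blast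
    qed
    then show ?case using step.IH lattice_cong_trans[OF A] lattice_cong_trans[OF B] by blast
  qed
qed

lemma low_embed: "p \<in> perms s \<Longrightarrow> \<forall>x\<in>set X \<union> set Y. s < x \<Longrightarrow> low (X @ p @ Y) = p"
proof -
  assume p: "p \<in> perms s" and XY: "\<forall>x\<in>set X \<union> set Y. s < x"
  have "\<forall>x\<in>set X. s < x" "\<forall>x\<in>set Y. s < x" using XY by auto
  then have "filter (\<lambda>x. x \<le> s) X = []" "filter (\<lambda>x. x \<le> s) Y = []" by (auto simp: filter_empty_conv)
  moreover have "filter (\<lambda>x. x \<le> s) p = p" using p by (auto simp: perms_def)
  ultimately show ?thesis unfolding low_def by simp
qed

lemma high_embed: "high (X @ map (\<lambda>x. x + (t-1)) q @ Y) = q" if "\<forall>x\<in>set X \<union> set Y. x < t" "q \<in> perms k"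
proof -
  have "\<forall>x\<in>set X. x < t" "\<forall>x\<in>set Y. x < t" using that by auto
  then have "filter (\<lambda>x. t \<le> x) X = []" "filter (\<lambda>x. t \<le> x) Y = []" by (auto simp: filter_empty_conv)
  moreover have "filter (\<lambda>x. t \<le> x) (map (\<lambda>x. x + (t-1)) q) = map (\<lambda>x. x + (t-1)) q"
  proof (rule filter_True)
    have "\<forall>x\<in>set q. 1 \<le> x" using that(2) by (auto simp: perms_def)
    then show "\<forall>x\<in>set (map (\<lambda>x. x + (t-1)) q). t \<le> x" using t_bounds by auto
  qed
  ultimately show ?thesis unfolding high_def by (simp add: map_idI)
qed

lemma high_of_filter: "filter (\<lambda>x. t \<le> x) w = map (\<lambda>x. x + (t-1)) q \<Longrightarrow> high w = q"
  unfolding high_def by (simp add: map_idI)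

lemma embed_low_cover_cong:
  assumes p: "P1 @ [a,b] @ P2 \<in> perms s" and ab: "a < b" and e: "(P1 @ [a,b] @ P2, P1 @ [b,a] @ P2) \<in> A"
    and w: "X @ (P1 @ [a,b] @ P2) @ Y \<in> perms m" and XY: "\<forall>x\<in>set X \<union> set Y. s < x"
  shows "(X @ (P1 @ [a,b] @ P2) @ Y, X @ (P1 @ [b,a] @ P2) @ Y) \<in> R"
proof -
  define L where "L = {x\<in>{a<..<b}. x \<in> set P1}"
  have fA: "(a,b,L) \<in> fences_of s A" unfolding L_def using fences_of_contracted_edge[OF A p ab e] .
  have ab1: "1 \<le> a" "b \<le> s" using p by (auto simp: perms_def)
  have Lsub: "L \<subseteq> {a<..<b}" unfolding L_def by auto
  have fR: "(a,b,L) \<in> fences_of m R" using fences_low[OF ab1(1) ab ab1(2) Lsub] fA by simp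
  have w': "(X @ P1) @ [a,b] @ (P2 @ Y) \<in> perms m" using w by simp
  have Xs: "\<And>x. x \<in> set X \<Longrightarrow> s < x" using XY by simp
  have "L = {x\<in>{a<..<b}. x \<in> set (X @ P1)}" unfolding L_def using Xs ab1 by fastforce
  from fences_of_contracts_edge[OF fR w' this] show ?thesis by simp
qed

lemma embed_high_cover_cong:
  assumes q: "Q1 @ [a,b] @ Q2 \<in> perms k" and ab: "a < b" and e: "(Q1 @ [a,b] @ Q2, Q1 @ [b,a] @ Q2) \<in> B"
    and w: "X @ map (\<lambda>x. x + (t-1)) (Q1 @ [a,b] @ Q2) @ Y \<in> perms m" and XY: "\<forall>x\<in>set X \<union> set Y. x < t"
  shows "(X @ map (\<lambda>x. x + (t-1)) (Q1 @ [a,b] @ Q2) @ Y, X @ map (\<lambda>x. x + (t-1)) (Q1 @ [b,a] @ Q2) @ Y) \<in> R"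
proof -
  define L where "L = {x\<in>{a<..<b}. x \<in> set Q1}"
  have fB: "(a,b,L) \<in> fences_of k B" unfolding L_def using fences_of_contracted_edge[OF B q ab e] .
  have ab1: "1 \<le> a" "b \<le> k" using q by (auto simp: perms_def)
  have Lsub: "L \<subseteq> {a<..<b}" unfolding L_def by auto
  have fR: "shift_fence (t-1) (a,b,L) \<in> fences_of m R" using fences_high[OF ab1(1) ab ab1(2) Lsub] fB by simp
  define sh where "sh x = x + (t-1)" for x :: nat
  have fR': "(sh a, sh b, sh ` L) \<in> fences_of m R" using fR unfolding shift_fence_def sh_def by simp
  have w': "(X @ map sh Q1) @ [sh a, sh b] @ (map sh Q2 @ Y) \<in> perms m" using w unfolding sh_def by simp
  have "sh ` L = {x\<in>{sh a<..<sh b}. x \<in> set (X @ map sh Q1)}"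
  proof
    show "sh ` L \<subseteq> {x\<in>{sh a<..<sh b}. x \<in> set (X @ map sh Q1)}" unfolding L_def sh_def by auto
    show "{x\<in>{sh a<..<sh b}. x \<in> set (X @ map sh Q1)} \<subseteq> sh ` L"
    proof
      fix x assume x: "x \<in> {x\<in>{sh a<..<sh b}. x \<in> set (X @ map sh Q1)}"
      have Xs: "\<And>x. x \<in> set X \<Longrightarrow> x < t" using XY by simp
      have "t \<le> sh a" unfolding sh_def using ab1 by simp
      then have "x \<notin> set X" using x Xs by fastforce
      then obtain y where "y \<in> set Q1" "x = sh y" using x by auto
      then show "x \<in> sh ` L" using x unfolding L_def sh_def by auto
    qed
  qed
  from fences_of_contracts_edge[OF fR' w' this] show ?thesis unfolding sh_def by simp
qed

lemma lift_low_cover_edge: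
  assumes pp: "(p,p'') \<in> cover_edges A" and w: "w \<in> perms m" "low w = p"
  shows "\<exists>w'\<in>perms m. (w,w') \<in> R \<and> low w' = p'' \<and> high w' = high w"
proof -
  have pr: "(p,p'') \<in> A" "weak_cover p p'' \<or> weak_cover p'' p" using pp unfolding cover_edges_def by auto
  have pp2: "p \<in> perms s" "p'' \<in> perms s" using lattice_cong_perms[OF A pr(1)] by auto
  obtain X Y where XY: "X @ p'' @ Y \<in> perms m" "filter (\<lambda>x. t \<le> x) (X @ p'' @ Y) = map (\<lambda>x. x + (t-1)) (high w)"
    "\<forall>x\<in>set X \<union> set Y. s < x" using embed_low[OF pp2(2) high_perms[OF w(1)]] by blast
  have sp: "set p = set p''" using pp2 by (simp add: perms_def)
  have w0: "X @ p @ Y \<in> perms m" using XY(1) sp pp2 by (auto simp: perms_def)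
  have key: "(X @ p @ Y, X @ p'' @ Y) \<in> R \<and> filter (\<lambda>x. t \<le> x) p = filter (\<lambda>x. t \<le> x) p''"
  proof (cases "weak_cover p p''")
    case True
    then obtain P1 a b P2 where d: "a < b" "p = P1 @ [a,b] @ P2" "p'' = P1 @ [b,a] @ P2" unfolding weak_cover_def by blast
    have "b \<le> s" using pp2 d by (auto simp: perms_def)
    then have "a < t" using d t_bounds by simp
    then have "filter (\<lambda>x. t \<le> x) p = filter (\<lambda>x. t \<le> x) p''" using d by simp
    then show ?thesis using embed_low_cover_cong[of P1 a b P2 X Y] d pp2 pr(1) w0 XY(3) by simp
  next
    case False
    then obtain P1 a b P2 where d: "a < b" "p'' = P1 @ [a,b] @ P2" "p = P1 @ [b,a] @ P2" using pr unfolding weak_cover_def by blast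
    have "b \<le> s" using pp2 d by (auto simp: perms_def)
    then have "a < t" using d t_bounds by simp
    then have "filter (\<lambda>x. t \<le> x) p = filter (\<lambda>x. t \<le> x) p''" using d by simp
    moreover have "(X @ p'' @ Y, X @ p @ Y) \<in> R"
      using embed_low_cover_cong[of P1 a b P2 X Y] d pp2 lattice_cong_sym[OF A pr(1)] XY(1,3) by simp
    ultimately show ?thesis using lattice_cong_sym[OF R] by blast
  qed
  have f1: "low (X @ p @ Y) = p" "low (X @ p'' @ Y) = p''" using low_embed XY(3) pp2 by auto
  have f2: "high (X @ p'' @ Y) = high w" using high_of_filter XY(2) .
  have "filter (\<lambda>x. t \<le> x) (X @ p @ Y) = filter (\<lambda>x. t \<le> x) (X @ p'' @ Y)" using key by simp
  then have f3: "high (X @ p @ Y) = high w" using f2 unfolding high_def by simp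
  have "(w, X @ p @ Y) \<in> R" using cong_of_same_low_high[OF w(1) w0] f1 f3 w(2) by simp
  then have "(w, X @ p'' @ Y) \<in> R" using key lattice_cong_trans[OF R] by blast
  then show ?thesis using XY(1) f1 f2 by blast
qed

lemma lift_high_cover_edge:
  assumes qq: "(q,q'') \<in> cover_edges B" and w: "w \<in> perms m" "high w = q"
  shows "\<exists>w'\<in>perms m. (w,w') \<in> R \<and> high w' = q'' \<and> low w' = low w"
proof -
  define sh where "sh x = x + (t-1)" for x :: nat
  have qr: "(q,q'') \<in> B" "weak_cover q q'' \<or> weak_cover q'' q" using qq unfolding cover_edges_def by auto
  have qq2: "q \<in> perms k" "q'' \<in> perms k" using lattice_cong_perms[OF B qr(1)] by auto
  obtain X Y where XY: "X @ map sh q'' @ Y \<in> perms m" "filter (\<lambda>x. x \<le> s) (X @ map sh q'' @ Y) = low w"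
    "\<forall>x\<in>set X \<union> set Y. x < t" using embed_high[OF low_perms[OF w(1)] qq2(2)] unfolding sh_def by blast
  have sq: "set q = set q''" using qq2 by (simp add: perms_def)
  have w0: "X @ map sh q @ Y \<in> perms m"
  proof -
    have "inj_on sh (set q)" unfolding sh_def by (simp add: inj_on_def)
    then have "distinct (map sh q)" using qq2 by (simp add: perms_def distinct_map)
    moreover have "set (map sh q) = set (map sh q'')" using sq by simp
    ultimately show ?thesis using XY(1) by (auto simp: perms_def)
  qed
  have key: "(X @ map sh q @ Y, X @ map sh q'' @ Y) \<in> R \<and> filter (\<lambda>x. x \<le> s) (map sh q) = filter (\<lambda>x. x \<le> s) (map sh q'')"
  proof (cases "weak_cover q q''")
    case True
    then obtain Q1 a b Q2 where d: "a < b" "q = Q1 @ [a,b] @ Q2" "q'' = Q1 @ [b,a] @ Q2" unfolding weak_cover_def by blast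
    have "1 \<le> a" using qq2 d by (auto simp: perms_def)
    then have "s < sh b" using d t_bounds unfolding sh_def by simp
    then have "filter (\<lambda>x. x \<le> s) (map sh q) = filter (\<lambda>x. x \<le> s) (map sh q'')" using d by simp
    then show ?thesis using embed_high_cover_cong[of Q1 a b Q2 X Y] d qq2 qr(1) w0 XY(3) unfolding sh_def by simp
  next
    case False
    then obtain Q1 a b Q2 where d: "a < b" "q'' = Q1 @ [a,b] @ Q2" "q = Q1 @ [b,a] @ Q2" using qr unfolding weak_cover_def by blast
    have "1 \<le> a" using qq2 d by (auto simp: perms_def)
    then have "s < sh b" using d t_bounds unfolding sh_def by simp
    then have "filter (\<lambda>x. x \<le> s) (map sh q) = filter (\<lambda>x. x \<le> s) (map sh q'')" using d by simp
    moreover have "(X @ map sh q'' @ Y, X @ map sh q @ Y) \<in> R"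
      using embed_high_cover_cong[of Q1 a b Q2 X Y] d qq2 lattice_cong_sym[OF B qr(1)] XY(1,3) unfolding sh_def by simp
    ultimately show ?thesis using lattice_cong_sym[OF R] by blast
  qed
  have f1: "high (X @ map sh q @ Y) = q" "high (X @ map sh q'' @ Y) = q''"
    using high_embed XY(3) qq2 unfolding sh_def by auto
  have f2: "low (X @ map sh q'' @ Y) = low w" using XY(2) unfolding low_def .
  have "filter (\<lambda>x. x \<le> s) (X @ map sh q @ Y) = filter (\<lambda>x. x \<le> s) (X @ map sh q'' @ Y)" using key by simp
  then have f3: "low (X @ map sh q @ Y) = low w" using f2 unfolding low_def by simp
  have "(w, X @ map sh q @ Y) \<in> R" using cong_of_same_low_high[OF w(1) w0] f1 f3 w(2) by simp
  then have "(w, X @ map sh q'' @ Y) \<in> R" using key lattice_cong_trans[OF R] by blast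
  then show ?thesis using XY(1) f1 f2 by blast
qed

lemma cong_of_low_high_cong:
  assumes w: "w \<in> perms m" "w' \<in> perms m" and a: "(low w, low w') \<in> A" and b: "(high w, high w') \<in> B"
  shows "(w,w') \<in> R"
proof -
  have "(low w, low w') \<in> (cover_edges A)\<^sup>*" using lattice_cong_cover_chain[OF A a] .
  then have "\<exists>w1\<in>perms m. (w,w1) \<in> R \<and> low w1 = low w' \<and> high w1 = high w"
  proof (induction rule: rtrancl_induct)
    case base then show ?case using w(1) lattice_cong_refl[OF R] by blast
  next
    case (step p p'')
    then obtain w1 where w1: "w1 \<in> perms m" "(w,w1) \<in> R" "low w1 = p" "high w1 = high w" by blast
    then obtain w2 where "w2 \<in> perms m" "(w1,w2) \<in> R" "low w2 = p''" "high w2 = high w1"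
      using lift_low_cover_edge[OF step.hyps(2) w1(1) w1(3)] by blast
    then show ?case using w1 lattice_cong_trans[OF R] by auto
  qed
  then obtain w1 where w1: "w1 \<in> perms m" "(w,w1) \<in> R" "low w1 = low w'" "high w1 = high w" by blast
  have "(high w1, high w') \<in> (cover_edges B)\<^sup>*" using lattice_cong_cover_chain[OF B] b w1(4) by simp
  then have "\<exists>w2\<in>perms m. (w1,w2) \<in> R \<and> high w2 = high w' \<and> low w2 = low w1"
  proof (induction rule: rtrancl_induct)
    case base then show ?case using w1(1) lattice_cong_refl[OF R] by blast
  next
    case (step q q'')
    then obtain w2 where w2: "w2 \<in> perms m" "(w1,w2) \<in> R" "high w2 = q" "low w2 = low w1" by blast
    then obtain w3 where "w3 \<in> perms m" "(w2,w3) \<in> R" "high w3 = q''" "low w3 = low w2"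
      using lift_high_cover_edge[OF step.hyps(2) w2(1) w2(3)] by blast
    then show ?case using w2 lattice_cong_trans[OF R] by auto
  qed
  then obtain w2 where w2: "w2 \<in> perms m" "(w1,w2) \<in> R" "high w2 = high w'" "low w2 = low w1" by blast
  have "(w2,w') \<in> R" using cong_of_same_low_high[OF w2(1) w(2)] w2 w1 by simp
  then show ?thesis using w1(2) w2(2) lattice_cong_trans[OF R] by blast
qed

theorem order_iso_factor_quotients: "order_iso (quot m R) quot_le (quot s A \<times> quot k B) (prod_le quot_le quot_le)"
proof -
  have "\<exists>w\<in>perms m. low w = p \<and> high w = q" if pq: "p \<in> perms s" "q \<in> perms k" for p q
  proof -
    obtain X Y where XY: "X @ p @ Y \<in> perms m" "filter (\<lambda>x. t \<le> x) (X @ p @ Y) = map (\<lambda>x. x + (t-1)) q"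
      "\<forall>x\<in>set X \<union> set Y. s < x" using embed_low[OF pq] by blast
    then show ?thesis using low_embed[OF pq(1) XY(3)] high_of_filter[OF XY(2)] by blast
  qed
  moreover have "equiv (perms m) R" "equiv (perms s) A" "equiv (perms k) B" using R A B lattice_cong_equiv by auto
  ultimately interpret quotient_product_map m s k R A B low high
    using low_perms high_perms low_high_cong_of_cong cong_of_low_high_cong low_high_mono lift_le
    by unfold_locales (auto simp: low_def high_def)
  show ?thesis by (rule order_iso_quotient_product)
qed

end

lemma unshift_shift_fence: "unshift_fence k (shift_fence k f) = f"
  by (cases f) (simp add: shift_fence_def unshift_fence_def image_image)

lemma shift_unshift_fence:
  assumes "k \<le> a" "a < b" "L \<subseteq> {a<..<b}"
  shows "shift_fence k (unshift_fence k (a,b,L)) = (a,b,L)"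
proof -
  have "(\<lambda>x. x - k + k) ` L = L" using assms by (auto intro!: image_cong[where g = id, simplified])
  then show ?thesis using assms by (auto simp: shift_fence_def unshift_fence_def image_image)
qed

lemma shift_fence_mem_iff:
  assumes "\<And>c d M. (c,d,M) \<in> S \<Longrightarrow> k \<le> c \<and> c < d \<and> M \<subseteq> {c<..<d}"
  shows "shift_fence k f \<in> S \<longleftrightarrow> f \<in> unshift_fence k ` S"
proof
  assume "shift_fence k f \<in> S"
  then show "f \<in> unshift_fence k ` S" by (rule image_eqI[rotated]) (simp add: unshift_shift_fence)
next
  assume "f \<in> unshift_fence k ` S"
  then obtain c d M where "(c,d,M) \<in> S" "f = unshift_fence k (c,d,M)" by auto
  then show "shift_fence k f \<in> S" using shift_unshift_fence[of k c d M] assms by auto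
qed

lemma weak_le_map_shift: "weak_le q q' \<Longrightarrow> weak_le (map (\<lambda>x. x + c) q) (map (\<lambda>x. x + c) q')"
  unfolding weak_le_def inversions_before by (auto simp: before_map subset_iff)

lemma map_shift_perms:
  "q \<in> perms k \<Longrightarrow> set (map (\<lambda>x. x + c) q) = {c+1..c+k} \<and> distinct (map (\<lambda>x. x + c) q)"
  by (auto simp: perms_def distinct_map inj_on_def add.commute)

lemma append_shift_perms:
  assumes p: "p \<in> perms s" and q: "q \<in> perms k"
  defines "w \<equiv> p @ map (\<lambda>x. x + s) q"
  shows "w \<in> perms (s + k)" "filter (\<lambda>x. x \<le> s) w = p" "filter (\<lambda>x. Suc s \<le> x) w = map (\<lambda>x. x + s) q"
    "inversions w = inversions p \<union> inversions (map (\<lambda>x. x + s) q)"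
proof -
  have sq: "set (map (\<lambda>x. x + s) q) = {s+1..s+k}" "distinct (map (\<lambda>x. x + s) q)" using map_shift_perms[OF q] by auto
  have sp: "set p = {1..s}" "distinct p" using p by (auto simp: perms_def)
  show "w \<in> perms (s + k)" using sq sp unfolding w_def perms_def by auto
  show "filter (\<lambda>x. x \<le> s) w = p" "filter (\<lambda>x. Suc s \<le> x) w = map (\<lambda>x. x + s) q"
    using sq sp unfolding w_def by (auto intro!: filter_True simp: filter_empty_conv)
  show "inversions w = inversions p \<union> inversions (map (\<lambda>x. x + s) q)"
    unfolding w_def by (rule inversions_append_separated) (use sq sp in auto)
qed

lemma quotient_split_iso:
  fixes n s :: nat and R A B :: "(nat list \<times> nat list) set"
  assumes sn: "1 \<le> s" "s \<le> n"
    and R: "lattice_cong (n+1) R" and fs: "(s, s+1, {}) \<in> fences_of (n+1) R"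
    and A: "lattice_cong s A"
    and FA: "fences_of s A = {(a,b,L) \<in> fences_of (n+1) R. 1 \<le> a \<and> a < b \<and> b \<le> s}"
    and B: "lattice_cong (n+1-s) B"
    and FB: "fences_of (n+1-s) B =
           unshift_fence s ` {(a,b,L) \<in> fences_of (n+1) R. s+1 \<le> a \<and> a < b \<and> b \<le> n+1}"
  shows "order_iso (quot (n+1) R) quot_le (quot s A \<times> quot (n+1-s) B) (prod_le quot_le quot_le)"
proof -
  interpret product_decomposition "n+1" s "Suc s" R A B
  proof (unfold_locales)
    show "1 \<le> s" "s \<le> n+1" "Suc s = s \<or> Suc s = Suc s" "Suc s \<le> n+1" using sn by auto
    show "lattice_cong (n+1) R" "lattice_cong s A" "lattice_cong (n+1+1 - Suc s) B" using R A B by simp_all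
  next
    fix U c d V assume p: "U @ [c,d] @ V \<in> perms (n+1)" and cd: "c < Suc s" "s < d"
    define L where "L = {x\<in>{c<..<d}. x \<in> set U}"
    have "is_fence (n+1) (c,d,L)" using p cd unfolding is_fence_def L_def by (auto simp: perms_def)
    then have "(c,d,L) \<in> fences_of (n+1) R" using fences_of_straddling[OF R] fs cd by simp
    then show "(U @ [c,d] @ V, U @ [d,c] @ V) \<in> R" using fences_of_contracts_edge p L_def by blast
  next
    fix a b L assume "1 \<le> a" "a < b" "b \<le> s" "L \<subseteq> {a<..<b}"
    then show "(a,b,L) \<in> fences_of s A \<longleftrightarrow> (a,b,L) \<in> fences_of (n+1) R" using FA by auto
  next
    fix a b L assume h: "1 \<le> a" "a < b" "b \<le> n+1+1 - Suc s" "L \<subseteq> {a<..<b}"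
    define S where "S = {(a,b,L) \<in> fences_of (n+1) R. s+1 \<le> a \<and> a < b \<and> b \<le> n+1}"
    have "shift_fence s (a,b,L) \<in> fences_of (n+1) R \<longleftrightarrow> shift_fence s (a,b,L) \<in> S"
      using h unfolding S_def by (auto simp: shift_fence_def fences_of_def is_fence_def)
    also have "\<dots> \<longleftrightarrow> (a,b,L) \<in> unshift_fence s ` S"
      by (rule shift_fence_mem_iff) (auto simp: S_def fences_of_def is_fence_def)
    finally show "(a,b,L) \<in> fences_of (n+1+1 - Suc s) B \<longleftrightarrow> shift_fence (Suc s - 1) (a,b,L) \<in> fences_of (n+1) R"
      using FB unfolding S_def by simp
  next
    fix p q assume "p \<in> perms s" "q \<in> perms (n+1+1 - Suc s)"
    then have pq: "p \<in> perms s" "q \<in> perms (n+1-s)" by simp_all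
    have w: "p @ map (\<lambda>x. x + s) q \<in> perms (n+1)" using append_shift_perms(1)[OF pq] sn by simp
    have sq: "\<forall>x\<in>set (map (\<lambda>x. x + s) q). s < x" using map_shift_perms[OF pq(2), of s] by auto
    have sp: "\<forall>x\<in>set p. x < Suc s" using pq(1) by (auto simp: perms_def)
    show "\<exists>X Y. X @ p @ Y \<in> perms (n+1) \<and> filter (\<lambda>x. Suc s \<le> x) (X @ p @ Y) = map (\<lambda>x. x + (Suc s - 1)) q
        \<and> (\<forall>x\<in>set X \<union> set Y. s < x)"
      using w sq append_shift_perms(3)[OF pq] by (intro exI[of _ "[]"] exI[of _ "map (\<lambda>x. x + s) q"]) simp
    show "\<exists>X Y. X @ map (\<lambda>x. x + (Suc s - 1)) q @ Y \<in> perms (n+1) \<and>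
        filter (\<lambda>x. x \<le> s) (X @ map (\<lambda>x. x + (Suc s - 1)) q @ Y) = p \<and> (\<forall>x\<in>set X \<union> set Y. x < Suc s)"
      using w sp append_shift_perms(2)[OF pq] by (intro exI[of _ p] exI[of _ "[]"]) simp
  next
    fix p p' q q' assume "p \<in> perms s" "p' \<in> perms s" "q \<in> perms (n+1+1 - Suc s)" "q' \<in> perms (n+1+1 - Suc s)"
      and le: "weak_le p p'" "weak_le q q'"
    then have pq: "p \<in> perms s" "p' \<in> perms s" "q \<in> perms (n+1-s)" "q' \<in> perms (n+1-s)" by simp_all
    have "weak_le (p @ map (\<lambda>x. x + s) q) (p' @ map (\<lambda>x. x + s) q')"
      using append_shift_perms(4)[OF pq(1,3)] append_shift_perms(4)[OF pq(2,4)] le weak_le_map_shift[OF le(2), of s]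
      unfolding weak_le_def by auto
    then show "\<exists>w w'. w \<in> perms (n+1) \<and> w' \<in> perms (n+1) \<and> filter (\<lambda>x. x \<le> s) w = p
        \<and> map (\<lambda>x. x - (Suc s - 1)) (filter (\<lambda>x. Suc s \<le> x) w) = q
        \<and> filter (\<lambda>x. x \<le> s) w' = p' \<and> map (\<lambda>x. x - (Suc s - 1)) (filter (\<lambda>x. Suc s \<le> x) w') = q'
        \<and> weak_le w w'"
      using append_shift_perms[OF pq(1,3)] append_shift_perms[OF pq(2,4)] sn
      by (intro exI[of _ "p @ map (\<lambda>x. x + s) q"] exI[of _ "p' @ map (\<lambda>x. x + s) q'"]) (simp add: map_idI)
  qed
  show ?thesis using order_iso_factor_quotients sn by simp
qed

lemma split_list_distinct:
  assumes "distinct u" "x \<in> set u"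
  obtains U1 U2 where "u = U1 @ x # U2" "set U1 \<union> set U2 = set u - {x}"
proof -
  obtain U1 U2 where "u = U1 @ x # U2" using assms(2) by (meson split_list)
  moreover then have "set U1 \<union> set U2 = set u - {x}" using assms(1) by auto
  ultimately show ?thesis using that by blast
qed

lemma replace_elem_distinct:
  assumes "distinct (U1 @ x # U2)" "distinct v" "set (U1 @ x # U2) \<inter> set v = {x}"
  shows "distinct (U1 @ v @ U2)" "set (U1 @ v @ U2) = set (U1 @ x # U2) \<union> set v"
  using assms by auto

lemma before_replace_elem:
  assumes "a \<in> set v" "a \<notin> set U1" "a \<notin> set U2" "b \<notin> set v"
  shows "before (U1 @ v @ U2) b a \<longleftrightarrow> b \<in> set U1"
  using assms before_set[of U1 b a] before_set[of U2 b a] before_set[of v b a] by (auto simp: before_append)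

text \<open>Two ways of gluing \<open>p \<in> perms s\<close> and \<open>q \<in> perms (n+1-s)\<close>, the latter shifted onto \<open>[s, n]\<close>,
  along the common value \<open>s\<close>: \<open>p\<close> replaces \<open>s\<close> inside the shifted \<open>q\<close>, or the shifted \<open>q\<close> replaces
  \<open>s\<close> inside \<open>p\<close>.\<close>

lemma glue_low_into_high:
  assumes p: "p \<in> perms s" and q: "q \<in> perms (n+1-s)" and s: "1 \<le> s" "s \<le> n"
  obtains X Y where "X @ p @ Y \<in> perms n" "filter (\<lambda>x. s \<le> x) (X @ p @ Y) = map (\<lambda>x. x + (s-1)) q"
    "filter (\<lambda>x. x \<le> s) (X @ p @ Y) = p" "\<forall>x\<in>set X \<union> set Y. s < x"
    "\<And>a b. a \<in> set p \<Longrightarrow> a < s \<Longrightarrow> s < b \<Longrightarrow> before (X @ p @ Y) b a \<longleftrightarrow> before (map (\<lambda>x. x + (s-1)) q) b s"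
proof -
  have hq: "set (map (\<lambda>x. x + (s-1)) q) = {s..n}" "distinct (map (\<lambda>x. x + (s-1)) q)"
    using map_shift_perms[OF q, of "s-1"] s by (simp_all add: le_add_diff_inverse2 del: distinct_map)
  have hp: "set p = {1..s}" "distinct p" using p by (auto simp: perms_def)
  have "s \<in> set (map (\<lambda>x. x + (s-1)) q)" "s \<in> set p" using hq(1) hp(1) s by auto
  then obtain X Y P1 P2 where Q: "map (\<lambda>x. x + (s-1)) q = X @ s # Y" "set X \<union> set Y = {s..n} - {s}"
    and P: "p = P1 @ s # P2" "set P1 \<union> set P2 = {1..s} - {s}"
    using split_list_distinct[OF hq(2)] split_list_distinct[OF hp(2)] unfolding hq(1) hp(1) by metis
  have "set X \<subseteq> {s..n} - {s}" "set Y \<subseteq> {s..n} - {s}" "set P1 \<subseteq> {1..s} - {s}" "set P2 \<subseteq> {1..s} - {s}"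
    unfolding Q(2)[symmetric] P(2)[symmetric] by auto
  then have XY: "\<forall>x\<in>set X. s < x" "\<forall>x\<in>set Y. s < x" and P12: "\<forall>x\<in>set P1. x < s" "\<forall>x\<in>set P2. x < s"
    by fastforce+
  have "set (X @ s # Y) \<inter> set p = {s}" using Q(2) hp(1) s by auto
  then have "distinct (X @ p @ Y)" "set (X @ p @ Y) = {s..n} \<union> {1..s}"
    using replace_elem_distinct[of X s Y p] hq hp unfolding Q(1) by auto
  moreover have "{s..n} \<union> {1..s} = {1..n}" using s by auto
  ultimately have perm: "X @ p @ Y \<in> perms n" unfolding perms_def by simp
  have "filter (\<lambda>x. s \<le> x) X = X" "filter (\<lambda>x. s \<le> x) Y = Y"
    "filter (\<lambda>x. s \<le> x) P1 = []" "filter (\<lambda>x. s \<le> x) P2 = []"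
    using XY P12 by (auto simp: filter_id_conv filter_empty_conv)
  then have high: "filter (\<lambda>x. s \<le> x) (X @ p @ Y) = map (\<lambda>x. x + (s-1)) q" unfolding P(1) Q(1) by simp
  have "filter (\<lambda>x. x \<le> s) X = []" "filter (\<lambda>x. x \<le> s) Y = []" "filter (\<lambda>x. x \<le> s) p = p"
    using XY hp by (auto simp: filter_id_conv filter_empty_conv)
  then have low: "filter (\<lambda>x. x \<le> s) (X @ p @ Y) = p" by simp
  have cross: "before (X @ p @ Y) b a \<longleftrightarrow> before (map (\<lambda>x. x + (s-1)) q) b s"
    if "a \<in> set p" "a < s" "s < b" for a b
  proof -
    have "a \<notin> set X" "a \<notin> set Y" "b \<notin> set p" "s \<notin> set X" "s \<notin> set Y" using that XY hp by auto
    then show ?thesis unfolding Q(1)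
      using before_replace_elem[of a p X Y b] before_replace_elem[of s "[s]" X Y b] that by auto
  qed
  have "\<forall>x\<in>set X \<union> set Y. s < x" using XY by blast
  from perm high low this cross show ?thesis by (rule that)
qed

lemma glue_high_into_low:
  assumes p: "p \<in> perms s" and q: "q \<in> perms (n+1-s)" and s: "1 \<le> s" "s \<le> n"
  obtains X Y where "X @ map (\<lambda>x. x + (s-1)) q @ Y \<in> perms n"
    "filter (\<lambda>x. x \<le> s) (X @ map (\<lambda>x. x + (s-1)) q @ Y) = p" "\<forall>x\<in>set X \<union> set Y. x < s"
proof -
  have hq: "set (map (\<lambda>x. x + (s-1)) q) = {s..n}" "distinct (map (\<lambda>x. x + (s-1)) q)"
    using map_shift_perms[OF q, of "s-1"] s by (simp_all add: le_add_diff_inverse2 del: distinct_map)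
  have hp: "set p = {1..s}" "distinct p" using p by (auto simp: perms_def)
  have "s \<in> set (map (\<lambda>x. x + (s-1)) q)" "s \<in> set p" using hq(1) hp(1) s by auto
  then obtain X Y Q1 Q2 where P: "p = X @ s # Y" "set X \<union> set Y = {1..s} - {s}"
    and Q: "map (\<lambda>x. x + (s-1)) q = Q1 @ s # Q2" "set Q1 \<union> set Q2 = {s..n} - {s}"
    using split_list_distinct[OF hq(2)] split_list_distinct[OF hp(2)] unfolding hq(1) hp(1) by metis
  have "set X \<subseteq> {1..s} - {s}" "set Y \<subseteq> {1..s} - {s}" "set Q1 \<subseteq> {s..n} - {s}" "set Q2 \<subseteq> {s..n} - {s}"
    unfolding Q(2)[symmetric] P(2)[symmetric] by auto
  then have XY: "\<forall>x\<in>set X. x < s" "\<forall>x\<in>set Y. x < s" and Q12: "\<forall>x\<in>set Q1. s < x" "\<forall>x\<in>set Q2. s < x"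
    by fastforce+
  have "set (X @ s # Y) \<inter> set (map (\<lambda>x. x + (s-1)) q) = {s}" using P(2) hq(1) s by auto
  then have "distinct (X @ map (\<lambda>x. x + (s-1)) q @ Y)" "set (X @ map (\<lambda>x. x + (s-1)) q @ Y) = {1..s} \<union> {s..n}"
    using replace_elem_distinct[of X s Y "map (\<lambda>x. x + (s-1)) q"] hq hp unfolding P(1) by auto
  moreover have "{1..s} \<union> {s..n} = {1..n}" using s by auto
  ultimately have perm: "X @ map (\<lambda>x. x + (s-1)) q @ Y \<in> perms n" unfolding perms_def by simp
  have "filter (\<lambda>x. x \<le> s) X = X" "filter (\<lambda>x. x \<le> s) Y = Y"
    "filter (\<lambda>x. x \<le> s) Q1 = []" "filter (\<lambda>x. x \<le> s) Q2 = []"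
    using XY Q12 by (auto simp: filter_id_conv filter_empty_conv)
  then have low: "filter (\<lambda>x. x \<le> s) (X @ map (\<lambda>x. x + (s-1)) q @ Y) = p" unfolding P(1) Q(1) by simp
  have "\<forall>x\<in>set X \<union> set Y. x < s" using XY by blast
  from perm low this show ?thesis by (rule that)
qed

lemma weak_le_glued:
  assumes w: "w \<in> perms n" "filter (\<lambda>x. x \<le> s) w = p" "filter (\<lambda>x. s \<le> x) w = Q"
    "\<And>a b. a \<in> set p \<Longrightarrow> a < s \<Longrightarrow> s < b \<Longrightarrow> before w b a \<longleftrightarrow> before Q b s"
    and w': "filter (\<lambda>x. x \<le> s) w' = p'" "filter (\<lambda>x. s \<le> x) w' = Q'"
    "\<And>a b. a \<in> set p' \<Longrightarrow> a < s \<Longrightarrow> s < b \<Longrightarrow> before w' b a \<longleftrightarrow> before Q' b s"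
    and p: "p \<in> perms s" "p' \<in> perms s" and le: "weak_le p p'" "weak_le Q Q'"
  shows "weak_le w w'"
  unfolding weak_le_def
proof (intro subsetI, clarify)
  fix a b assume "(a,b) \<in> inversions w"
  then have h: "a < b" "before w b a" unfolding inversions_before by auto
  have "before w' b a"
  proof (cases "b \<le> s")
    case True
    then have "(a,b) \<in> inversions p" using h w(2) before_filter[of "\<lambda>x. x \<le> s" w b a] by (simp add: inversions_before)
    then have "before p' b a" using le(1) unfolding weak_le_def inversions_before by auto
    then show ?thesis using w'(1) before_filter[of "\<lambda>x. x \<le> s" w' b a] by simp
  next
    case b: False
    show ?thesis
    proof (cases "s \<le> a")
      case True
      then have "(a,b) \<in> inversions Q" using h w(3) before_filter[of "\<lambda>x. s \<le> x" w b a] by (simp add: inversions_before)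
      then have "before Q' b a" using le(2) unfolding weak_le_def inversions_before by auto
      then show ?thesis using w'(2) True h(1) before_filter[of "\<lambda>x. s \<le> x" w' b a] by simp
    next
      case False
      have "a \<in> {1..s}" using before_set[OF h(2)] w(1) False by (auto simp: perms_def)
      then have a: "a \<in> set p" "a \<in> set p'" using p by (auto simp: perms_def)
      have "(s,b) \<in> inversions Q" using w(4)[OF a(1)] h False b unfolding inversions_before by auto
      then have "before Q' b s" using le(2) unfolding weak_le_def inversions_before by auto
      then show ?thesis using w'(3)[OF a(2)] False b by auto
    qed
  qed
  then show "(a,b) \<in> inversions w'" using h(1) unfolding inversions_before by auto
qed

lemma glued_lift_le:
  assumes pq: "p \<in> perms s" "p' \<in> perms s" "q \<in> perms (n+1-s)" "q' \<in> perms (n+1-s)"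
    and le: "weak_le p p'" "weak_le q q'" and s: "1 \<le> s" "s \<le> n"
  shows "\<exists>w w'. w \<in> perms n \<and> w' \<in> perms n \<and> filter (\<lambda>x. x \<le> s) w = p
        \<and> map (\<lambda>x. x - (s-1)) (filter (\<lambda>x. s \<le> x) w) = q
        \<and> filter (\<lambda>x. x \<le> s) w' = p' \<and> map (\<lambda>x. x - (s-1)) (filter (\<lambda>x. s \<le> x) w') = q'
        \<and> weak_le w w'"
proof -
  obtain X Y where W: "X @ p @ Y \<in> perms n" "filter (\<lambda>x. s \<le> x) (X @ p @ Y) = map (\<lambda>x. x + (s-1)) q"
     "filter (\<lambda>x. x \<le> s) (X @ p @ Y) = p" "\<forall>x\<in>set X \<union> set Y. s < x"
     "\<And>a b. a \<in> set p \<Longrightarrow> a < s \<Longrightarrow> s < b \<Longrightarrow> before (X @ p @ Y) b a \<longleftrightarrow> before (map (\<lambda>x. x + (s-1)) q) b s"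
    by (rule glue_low_into_high[OF pq(1,3) s], rule that)
  obtain X' Y' where W': "X' @ p' @ Y' \<in> perms n" "filter (\<lambda>x. s \<le> x) (X' @ p' @ Y') = map (\<lambda>x. x + (s-1)) q'"
     "filter (\<lambda>x. x \<le> s) (X' @ p' @ Y') = p'" "\<forall>x\<in>set X' \<union> set Y'. s < x"
     "\<And>a b. a \<in> set p' \<Longrightarrow> a < s \<Longrightarrow> s < b \<Longrightarrow> before (X' @ p' @ Y') b a \<longleftrightarrow> before (map (\<lambda>x. x + (s-1)) q') b s"
    by (rule glue_low_into_high[OF pq(2,4) s], rule that)
  have "weak_le (X @ p @ Y) (X' @ p' @ Y')"
    using weak_le_glued[OF W(1,3,2,5) W'(3,2,5) pq(1,2) le(1) weak_le_map_shift[OF le(2)]] .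
  then show ?thesis
    using W(1-3) W'(1-3) by (intro exI[of _ "X @ p @ Y"] exI[of _ "X' @ p' @ Y'"]) (simp add: map_idI)
qed

text \<open>Every fence straddling \<open>s\<close> lies below \<open>f(s-1, s+1, L \<inter> {s})\<close> in the forcing order.\<close>

lemma straddling_in_fence_downset:
  assumes "2 \<le> s" "is_fence n (c,d,L)" "c < s" "s < d"
  shows "(c,d,L) \<in> fence_downset n {(s-1, s+1, {}), (s-1, s+1, {s})}"
proof -
  define g where "g = (s-1, s+1, L \<inter> {s})"
  have "{s-1<..<s+1} = {s}" using assms(1) by auto
  then have "(c,d,L) = g \<or> forces (c,d,L) g"
    using assms(2-4) unfolding g_def forces_def is_fence_def by auto
  moreover have "g \<in> {(s-1, s+1, {}), (s-1, s+1, {s})}" unfolding g_def by auto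
  ultimately show ?thesis unfolding fence_downset_def using assms(2) by blast
qed

locale glued_fences =
  fixes n s :: nat and R' A B :: "(nat list \<times> nat list) set"
  assumes s: "2 \<le> s"
    and F: "fences_of n R' = fences_of s A \<union> shift_fence (s-1) ` fences_of (n+1-s) B
                    \<union> fence_downset n {(s-1, s+1, {}), (s-1, s+1, {s})}"
begin

lemma fences_of_low:
  assumes "1 \<le> a" "a < b" "b \<le> s"
  shows "(a,b,L) \<in> fences_of n R' \<longleftrightarrow> (a,b,L) \<in> fences_of s A"
proof -
  have "(a,b,L) \<notin> shift_fence (s-1) ` fences_of (n+1-s) B"
    using assms s by (auto simp: fences_of_def is_fence_def shift_fence_def)
  moreover have "(a,b,L) \<notin> fence_downset n {(s-1, s+1, {}), (s-1, s+1, {s})}"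
    using assms unfolding fence_downset_def forces_def by auto
  ultimately show ?thesis using F by blast
qed

lemma fences_of_high:
  assumes "1 \<le> a" "a < b"
  shows "shift_fence (s-1) (a,b,L) \<in> fences_of n R' \<longleftrightarrow> (a,b,L) \<in> fences_of (n+1-s) B"
proof -
  have "shift_fence (s-1) (a,b,L) \<notin> fences_of s A"
    using assms s by (auto simp: fences_of_def is_fence_def shift_fence_def)
  moreover have "shift_fence (s-1) (a,b,L) \<notin> fence_downset n {(s-1, s+1, {}), (s-1, s+1, {s})}"
    using assms s unfolding fence_downset_def forces_def shift_fence_def by auto
  moreover have "inj (shift_fence (s-1))" by (metis injI unshift_shift_fence)
  ultimately show ?thesis using F by (auto simp: inj_image_mem_iff)
qed

end

lemma quotient_glued_iso:
  fixes n s :: nat and R' A B :: "(nat list \<times> nat list) set"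
  assumes sn: "2 \<le> s" "s \<le> n - 1"
    and A: "lattice_cong s A" and B: "lattice_cong (n+1-s) B" and R': "lattice_cong n R'"
    and F: "fences_of n R' = fences_of s A \<union> shift_fence (s-1) ` fences_of (n+1-s) B
                    \<union> fence_downset n {(s-1, s+1, {}), (s-1, s+1, {s})}"
  shows "order_iso (quot n R') quot_le (quot s A \<times> quot (n+1-s) B) (prod_le quot_le quot_le)"
proof -
  interpret glued_fences n s R' A B using sn(1) F by unfold_locales
  have s: "1 \<le> s" "s \<le> n" using sn by auto
  interpret product_decomposition n s s R' A B
  proof (unfold_locales)
    show "1 \<le> s" "s \<le> n" "s = s \<or> s = Suc s" using s by auto
    show "lattice_cong n R'" "lattice_cong s A" "lattice_cong (n+1-s) B" by (fact R' A B)+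
  next
    fix U c d V assume p: "U @ [c,d] @ V \<in> perms n" and cd: "c < s" "s < d"
    define L where "L = {x\<in>{c<..<d}. x \<in> set U}"
    have "is_fence n (c,d,L)" using p cd unfolding is_fence_def L_def by (auto simp: perms_def)
    then have "(c,d,L) \<in> fences_of n R'" using straddling_in_fence_downset[OF sn(1) _ cd] F by blast
    then show "(U @ [c,d] @ V, U @ [d,c] @ V) \<in> R'" using fences_of_contracts_edge p L_def by blast
  next
    fix a b L assume "1 \<le> a" "a < b" "b \<le> s" "L \<subseteq> {a<..<b}"
    then show "(a,b,L) \<in> fences_of s A \<longleftrightarrow> (a,b,L) \<in> fences_of n R'" using fences_of_low by blast
  next
    fix a b L assume "1 \<le> a" "a < b" "b \<le> n+1-s" "L \<subseteq> {a<..<b}"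
    then show "(a,b,L) \<in> fences_of (n+1-s) B \<longleftrightarrow> shift_fence (s-1) (a,b,L) \<in> fences_of n R'"
      using fences_of_high by blast
  next
    fix p q assume pq: "p \<in> perms s" "q \<in> perms (n+1-s)"
    show "\<exists>X Y. X @ p @ Y \<in> perms n \<and> filter (\<lambda>x. s \<le> x) (X @ p @ Y) = map (\<lambda>x. x + (s-1)) q
        \<and> (\<forall>x\<in>set X \<union> set Y. s < x)"
      by (rule glue_low_into_high[OF pq s]) blast
    show "\<exists>X Y. X @ map (\<lambda>x. x + (s-1)) q @ Y \<in> perms n
        \<and> filter (\<lambda>x. x \<le> s) (X @ map (\<lambda>x. x + (s-1)) q @ Y) = p \<and> (\<forall>x\<in>set X \<union> set Y. x < s)"
      by (rule glue_high_into_low[OF pq s]) blast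
  next
    fix p p' q q' assume "p \<in> perms s" "p' \<in> perms s" "q \<in> perms (n+1-s)" "q' \<in> perms (n+1-s)"
      "weak_le p p'" "weak_le q q'"
    then show "\<exists>w w'. w \<in> perms n \<and> w' \<in> perms n \<and> filter (\<lambda>x. x \<le> s) w = p
        \<and> map (\<lambda>x. x - (s-1)) (filter (\<lambda>x. s \<le> x) w) = q
        \<and> filter (\<lambda>x. x \<le> s) w' = p' \<and> map (\<lambda>x. x - (s-1)) (filter (\<lambda>x. s \<le> x) w') = q'
        \<and> weak_le w w'"
      using s by (rule glued_lift_le)
  qed
  show ?thesis by (rule order_iso_factor_quotients)
qed

theorem mainTheorem7:
  fixes n s :: nat
    and R A B :: "(nat list \<times> nat list) set"
  assumes "n \<ge> 2" and "1 \<le> s" and "s \<le> n"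
    and "lattice_cong (n+1) R"
    and "(s, s+1, {}) \<in> fences_of (n+1) R"
    and "lattice_cong s A"
    and "fences_of s A = {(a,b,L) \<in> fences_of (n+1) R. 1 \<le> a \<and> a < b \<and> b \<le> s}"
    and "lattice_cong (n+1-s) B"
    and "fences_of (n+1-s) B =
           unshift_fence s ` {(a,b,L) \<in> fences_of (n+1) R. s+1 \<le> a \<and> a < b \<and> b \<le> n+1}"
  shows "order_iso (quot (n+1) R) quot_le (quot s A \<times> quot (n+1-s) B) (prod_le quot_le quot_le)
         \<and> (2 \<le> s \<and> s \<le> n - 1 \<longrightarrow>
              (\<forall>R'. lattice_cong n R' \<and>
                 fences_of n R' = fences_of s A \<union> shift_fence (s-1) ` fences_of (n+1-s) B
                    \<union> fence_downset n {(s-1, s+1, {}), (s-1, s+1, {s})}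
               \<longrightarrow> order_iso (quot n R') quot_le (quot s A \<times> quot (n+1-s) B) (prod_le quot_le quot_le)
                   \<and> order_iso (quot (n+1) R) quot_le (quot n R') quot_le))"
proof (intro conjI impI allI)
  show split: "order_iso (quot (n+1) R) quot_le (quot s A \<times> quot (n+1-s) B) (prod_le quot_le quot_le)"
    using quotient_split_iso assms(2-9) by blast
  fix R' assume "2 \<le> s \<and> s \<le> n - 1" and "lattice_cong n R' \<and>
    fences_of n R' = fences_of s A \<union> shift_fence (s-1) ` fences_of (n+1-s) B
      \<union> fence_downset n {(s-1, s+1, {}), (s-1, s+1, {s})}"
  then show glued: "order_iso (quot n R') quot_le (quot s A \<times> quot (n+1-s) B) (prod_le quot_le quot_le)"
    using quotient_glued_iso assms(6,8) by blast
  show "order_iso (quot (n+1) R) quot_le (quot n R') quot_le"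
    using order_iso_trans[OF split order_iso_sym[OF glued]] .
qed

end
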